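(* Let $m\ge 1$, let $h$ be an $m$-times weak Lefschetz O-sequence, $n=h_1$, $R=K[x_1,\ldots,x_n]$. Then $R/\mathcal{W}_m(h)$ has $m$-times the weak Lefschetz property.
   Context: $K$ is an infinite field of characteristic $0$. An O-sequence is a sequence of non-negative integers that is the Hilbert function of some standard graded $K$-algebra; a finite O-sequence $h:1=h_0,\ldots,h_s$, $h_s\ne0$, has length $s$. $h$ is unimodal if $h_0<h_1<\cdots<h_k\ge h_{k+1}\ge\cdots\ge h_s$ for some $k$; then $\Delta h:=1,h_1-h_0,\ldots,h_k-h_{k-1}$. An O-sequence is $0$-times weak Lefschetz by convention; $h$ is an $m$-times weak Lefschetz O-sequence if it is unimodal and $\Delta h$ is an $(m-1)$-times weak Lefschetz O-sequence. Monomials are ordered with $x_1>\cdots>x_n$, rev-lex = degree reverse lexicographic order. Define $\mathcal{W}_0(g)=\mathrm{Lex}(g)$, the lex-segment ideal in $K[x_1,\ldots,x_{g_1}]$ with Hilbert function $g$ (degree-$d$ component spanned by the largest monomials of degree $d$ in lex order, as many as needed). For $m\ge1$, with $R'=K[x_1,\ldots,x_{n-1}]$: start with $I=\mathcal{W}_{m-1}(\Delta h)R$ (ideal of $R'$ extended to $R$); while the Hilbert function of $R/I$ differs from $h$, let $d_0$ be the least degree where they differ, $r=\dim_K(R/I)_{d_0}-h_{d_0}>0$, and add to $I$ the $r$ largest rev-lex monomials of degree $d_0$ not in $I$. The procedure terminates with an ideal $\mathcal{W}_m(h)$ such that $R/\mathcal{W}_m(h)$ has Hilbert function $h$. A standard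 graded algebra $A$ (Artinian in the paper) has the weak Lefschetz property (WLP) if there is $\ell\in A_1$ (a weak Lefschetz element, WLE) such that multiplication $\times\ell:A_d\to A_{d+1}$ has maximal rank for all $d\ge1$; $A$ has $m$-times the WLP if there are $\ell_1,\ldots,\ell_m\in A_1$ with $\ell_1$ a WLE for $A$ and $\ell_i$ a WLE for $A/(\ell_1,\ldots,\ell_{i-1})$ for $i=2,\ldots,m$. *)

theory Defs
  imports Complex_Main "HOL-Library.Poly_Mapping"
begin

text \<open>Monomials are exponent vectors (nat =>0 nat); variable x_i has index i (i >= 1).
  Polynomials with coefficients in 'k are finitely supported maps from monomials to 'k.\<close>

type_synonym 'k mpoly = "(nat \<Rightarrow>\<^sub>0 nat) \<Rightarrow>\<^sub>0 'k"

definition mdeg :: "(nat \<Rightarrow>\<^sub>0 nat) \<Rightarrow> nat" where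
  "mdeg a = (\<Sum>i\<in>Poly_Mapping.keys a. Poly_Mapping.lookup a i)"

definition Mon :: "nat \<Rightarrow> nat \<Rightarrow> (nat \<Rightarrow>\<^sub>0 nat) set" where
  "Mon n d = {a. Poly_Mapping.keys a \<subseteq> {1..n} \<and> mdeg a = d}"

definition monom :: "(nat \<Rightarrow>\<^sub>0 nat) \<Rightarrow> 'k::zero_neq_one mpoly" where
  "monom a = Poly_Mapping.single a 1"

definition polyring :: "nat \<Rightarrow> 'k::zero mpoly set" where
  "polyring n = {f. \<forall>a\<in>Poly_Mapping.keys f. Poly_Mapping.keys a \<subseteq> {1..n}}"

definition hom :: "nat \<Rightarrow> nat \<Rightarrow> 'k::zero mpoly set" where
  "hom n d = {f. Poly_Mapping.keys f \<subseteq> Mon n d}"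

definition is_ideal :: "nat \<Rightarrow> 'k::comm_ring_1 mpoly set \<Rightarrow> bool" where
  "is_ideal n I \<longleftrightarrow> I \<subseteq> polyring n \<and> 0 \<in> I \<and> (\<forall>f\<in>I. \<forall>g\<in>I. f + g \<in> I)
     \<and> (\<forall>r\<in>polyring n. \<forall>f\<in>I. r * f \<in> I)"

definition ideal_gen :: "nat \<Rightarrow> 'k::comm_ring_1 mpoly set \<Rightarrow> 'k mpoly set" where
  "ideal_gen n G = \<Inter>{I. is_ideal n I \<and> G \<subseteq> I}"

definition kscale :: "'k::field \<Rightarrow> 'k mpoly \<Rightarrow> 'k mpoly" where
  "kscale c f = Poly_Mapping.map ((*) c) f"

definition dimK :: "'k::field mpoly set \<Rightarrow> nat" where
  "dimK S = vector_space.dim kscale S"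

definition hilb :: "nat \<Rightarrow> 'k::field mpoly set \<Rightarrow> nat \<Rightarrow> nat" where
  "hilb n I d = dimK (hom n d :: 'k mpoly set) - dimK (I \<inter> hom n d)"

text \<open>A finite sequence h_0,...,h_s is a list of length s+1; it is extended by 0.\<close>
definition hv :: "nat list \<Rightarrow> nat \<Rightarrow> nat" where
  "hv h d = (if d < length h then h ! d else 0)"

text \<open>O-sequence: Hilbert function of a standard graded K-algebra R/I, I a homogeneous
  ideal (generated by homogeneous polynomials) of some K[x_1,...,x_n];
  finite: 1 = h_0,...,h_s with h_s nonzero and zero afterwards.\<close>
definition Oseq :: "'k::field itself \<Rightarrow> nat list \<Rightarrow> bool" where
  "Oseq _ h \<longleftrightarrow> h \<noteq> [] \<and> h ! 0 = 1 \<and> last h \<noteq> 0 \<and>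
     (\<exists>n (G :: 'k mpoly set). G \<subseteq> (\<Union>d. hom n d) \<and>
        (\<forall>d. hilb n (ideal_gen n G) d = hv h d))"

definition unimodal_at :: "nat list \<Rightarrow> nat \<Rightarrow> bool" where
  "unimodal_at h k \<longleftrightarrow> k < length h \<and> (\<forall>i<k. h ! i < h ! Suc i) \<and>
     (\<forall>i. k \<le> i \<longrightarrow> Suc i < length h \<longrightarrow> h ! Suc i \<le> h ! i)"

definition unimodal :: "nat list \<Rightarrow> bool" where
  "unimodal h \<longleftrightarrow> (\<exists>k. unimodal_at h k)"

definition Delta :: "nat list \<Rightarrow> nat list" where
  "Delta h = (let k = (THE k. unimodal_at h k) in
      1 # map (\<lambda>i. h ! i - h ! (i - 1)) [1..<Suc k])"

fun WLseq :: "'k::field itself \<Rightarrow> nat \<Rightarrow> nat list \<Rightarrow> bool" where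
  "WLseq T 0 h = Oseq T h"
| "WLseq T (Suc m) h = (Oseq T h \<and> unimodal h \<and> WLseq T m (Delta h))"

definition lex_gt :: "(nat \<Rightarrow>\<^sub>0 nat) \<Rightarrow> (nat \<Rightarrow>\<^sub>0 nat) \<Rightarrow> bool" where
  "lex_gt a b \<longleftrightarrow> (\<exists>i. Poly_Mapping.lookup b i < Poly_Mapping.lookup a i \<and> (\<forall>j<i. Poly_Mapping.lookup a j = Poly_Mapping.lookup b j))"

definition revlex_gt :: "(nat \<Rightarrow>\<^sub>0 nat) \<Rightarrow> (nat \<Rightarrow>\<^sub>0 nat) \<Rightarrow> bool" where
  "revlex_gt a b \<longleftrightarrow> mdeg b < mdeg a \<or>
     (mdeg a = mdeg b \<and> (\<exists>i. Poly_Mapping.lookup a i < Poly_Mapping.lookup b i \<and> (\<forall>j>i. Poly_Mapping.lookup a j = Poly_Mapping.lookup b j)))"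

definition top :: "('a \<Rightarrow> 'a \<Rightarrow> bool) \<Rightarrow> nat \<Rightarrow> 'a set \<Rightarrow> 'a set" where
  "top gt r S = {a\<in>S. card {b\<in>S. gt b a} < r}"

text \<open>Lex(g): lex-segment ideal in K[x_1,...,x_(g_1)] with Hilbert function g.\<close>
definition Lex :: "nat list \<Rightarrow> 'k::field mpoly set" where
  "Lex g = (let N = hv g 1 in
     ideal_gen N (\<Union>d. monom ` top lex_gt (card (Mon N d) - hv g d) (Mon N d)))"

fun wstage :: "nat \<Rightarrow> nat list \<Rightarrow> 'k::field mpoly set \<Rightarrow> nat \<Rightarrow> 'k mpoly set" where
  "wstage n h I0 0 = I0"
| "wstage n h I0 (Suc d) = (let I = wstage n h I0 d in
     ideal_gen n (I \<union> monom ` top revlex_gt (hilb n I d - hv h d)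
                                    {a\<in>Mon n d. monom a \<notin> I}))"

fun W :: "nat \<Rightarrow> nat list \<Rightarrow> 'k::field mpoly set" where
  "W 0 g = Lex g"
| "W (Suc m) h = (let n = hv h 1 in
     (\<Union>d. wstage n h (ideal_gen n (W m (Delta h))) d))"

text \<open>Multiplication by the class of the linear form L, (R/I)_d -> (R/I)_(d+1),
  has maximal rank, i.e. is injective or surjective.\<close>
definition maxrank :: "nat \<Rightarrow> 'k::field mpoly set \<Rightarrow> 'k mpoly \<Rightarrow> nat \<Rightarrow> bool" where
  "maxrank n I L d \<longleftrightarrow>
     (\<forall>f\<in>hom n d. L * f \<in> I \<longrightarrow> f \<in> I) \<or>
     (\<forall>g\<in>hom n (Suc d). \<exists>f\<in>hom n d. g - L * f \<in> I)"

definition WLE :: "nat \<Rightarrow> 'k::field mpoly set \<Rightarrow> 'k mpoly \<Rightarrow> bool" where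
  "WLE n I L \<longleftrightarrow> L \<in> hom n 1 \<and> (\<forall>d\<ge>1. maxrank n I L d)"

definition mWLP :: "nat \<Rightarrow> 'k::field mpoly set \<Rightarrow> nat \<Rightarrow> bool" where
  "mWLP n I m \<longleftrightarrow> (\<exists>Ls. length Ls = m \<and>
     (\<forall>i<m. WLE n (ideal_gen n (I \<union> set (take i Ls))) (Ls ! i)))"

end

theory Submission
  imports Defs
begin

text \<open>All ideals in sight are monomial ideals, described by upward closed sets of monomials.
  Let \<open>V\<close> be the monomial set of \<open>W_{m-1}(\<Delta>h)\<close> in \<open>R' = K[x_1,...,x_{n-1}]\<close>. Up to the
  peak of \<open>h\<close> the partial sums of \<open>\<Delta>h\<close> are the values of \<open>h\<close>, and beyond the peak \<open>\<Delta>h\<close>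
  vanishes; hence the procedure building \<open>W_m(h)\<close> from \<open>VR\<close> only ever adds monomials divisible
  by \<open>x_n\<close>, and \<open>R/(W_m(h) + (x_n)) \<cong> R'/W_{m-1}(\<Delta>h)\<close>. Weak Lefschetz elements of the latter
  therefore remain such for the former, which supplies the last \<open>m - 1\<close> elements by induction.

  The first element is \<open>x_n\<close>. If multiplication by \<open>x_n\<close> on \<open>R/W_m(h)\<close> fails to be injective
  in degree \<open>d\<close>, some \<open>x_n a\<close> was added at a stage where \<open>a\<close> was not. Every \<open>x_n\<close>-free monomial
  of that degree is rev-lex larger than \<open>x_n a\<close>, so all of them were added as well; then every
  \<open>x_n\<close>-free monomial of degree \<open>d + 1\<close> lies in \<open>W_m(h)\<close>, and multiplication by \<open>x_n\<close> is onto.\<close>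

abbreviation lookup :: "('a \<Rightarrow>\<^sub>0 'b::zero) \<Rightarrow> 'a \<Rightarrow> 'b" where "lookup \<equiv> Poly_Mapping.lookup"
abbreviation keys :: "('a \<Rightarrow>\<^sub>0 'b::zero) \<Rightarrow> 'a set" where "keys \<equiv> Poly_Mapping.keys"
abbreviation single :: "'a \<Rightarrow> 'b \<Rightarrow> ('a \<Rightarrow>\<^sub>0 'b::zero)" where "single \<equiv> Poly_Mapping.single"

abbreviation var :: "nat \<Rightarrow> 'k::zero_neq_one mpoly" where "var i \<equiv> monom (single i 1)"

section \<open>Monomials\<close>

definition Mons :: "nat \<Rightarrow> (nat \<Rightarrow>\<^sub>0 nat) set" where
  "Mons n = {a. keys a \<subseteq> {1..n}}"

definition mdvd :: "(nat \<Rightarrow>\<^sub>0 nat) \<Rightarrow> (nat \<Rightarrow>\<^sub>0 nat) \<Rightarrow> bool" where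
  "mdvd s a \<longleftrightarrow> (\<forall>i. lookup s i \<le> lookup a i)"

lemma mdeg_eq_sum: "finite F \<Longrightarrow> keys a \<subseteq> F \<Longrightarrow> mdeg a = (\<Sum>i\<in>F. lookup a i)"
  unfolding mdeg_def
  by (rule sum.mono_neutral_left) (auto simp: in_keys_iff)

lemma mdeg_add: "mdeg (a + b) = mdeg a + mdeg b"
proof -
  let ?F = "keys a \<union> keys b"
  have "mdeg (a + b) = (\<Sum>i\<in>?F. lookup (a+b) i)"
    using keys_add[of a b] by (intro mdeg_eq_sum) auto
  also have "\<dots> = (\<Sum>i\<in>?F. lookup a i) + (\<Sum>i\<in>?F. lookup b i)"
    by (simp add: lookup_add sum.distrib)
  also have "\<dots> = mdeg a + mdeg b"
    by (subst (1 2) mdeg_eq_sum[of ?F]) auto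
  finally show ?thesis .
qed

lemma mdeg_single [simp]: "mdeg (single i k) = k"
  unfolding mdeg_def by (cases "k = 0") auto

lemma mdeg_zero [simp]: "mdeg 0 = 0"
  unfolding mdeg_def by simp

lemma lookup_le_mdeg: "lookup a i \<le> mdeg a"
proof (cases "i \<in> keys a")
  case True
  then show ?thesis unfolding mdeg_def
    by (metis finite_keys member_le_sum zero_le)
next
  case False then show ?thesis by (simp add: in_keys_iff)
qed

lemma mdvd_refl [simp]: "mdvd a a" by (simp add: mdvd_def)

lemma mdvd_add_diff: "mdvd s a \<Longrightarrow> a = s + (a - s)"
  by (rule poly_mapping_eqI) (auto simp: mdvd_def lookup_add lookup_minus)

lemma keys_diff_subset: "keys (a - s) \<subseteq> keys (a :: nat \<Rightarrow>\<^sub>0 nat)"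
  by (auto simp: in_keys_iff lookup_minus)

lemma mdeg_mono: "mdvd s a \<Longrightarrow> mdeg s \<le> mdeg a"
  by (metis mdvd_add_diff mdeg_add le_add1)

lemma mdvd_add_mono: "mdvd s a \<Longrightarrow> mdvd s (a + c)"
  unfolding mdvd_def by (metis lookup_add trans_le_add1)

lemma Mons_diff: "a \<in> Mons n \<Longrightarrow> a - s \<in> Mons n"
  using keys_diff_subset[of a s] by (auto simp: Mons_def)

lemma Mons_add: "a \<in> Mons n \<Longrightarrow> c \<in> Mons n \<Longrightarrow> a + c \<in> Mons n"
  using keys_add[of a c] by (auto simp: Mons_def)

lemma Mon_Mons: "a \<in> Mon n d \<Longrightarrow> a \<in> Mons n"
  by (simp add: Mon_def Mons_def)

lemma finite_Mon: "finite (Mon n d)"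
proof -
  let ?g = "\<lambda>a::nat \<Rightarrow>\<^sub>0 nat. map (lookup a) [1..<Suc n]"
  have inj: "inj_on ?g (Mon n d)"
  proof (rule inj_onI)
    fix a b assume a: "a \<in> Mon n d" and b: "b \<in> Mon n d" and e: "?g a = ?g b"
    show "a = b"
    proof (rule poly_mapping_eqI)
      fix i show "lookup a i = lookup b i"
      proof (cases "i \<in> {1..n}")
        case True
        then have "i \<in> set [1..<Suc n]" by auto
        moreover have "\<forall>x\<in>set [1..<Suc n]. lookup a x = lookup b x" using e by (simp only: map_eq_conv)
        ultimately show ?thesis by blast
      next
        case False
        then have "i \<notin> keys a" "i \<notin> keys b" using a b by (auto simp: Mon_def)
        then show ?thesis by (simp add: in_keys_iff)
      qed
    qed
  qed
  have "?g ` Mon n d \<subseteq> {xs. set xs \<subseteq> {0..d} \<and> length xs = n}"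
    using lookup_le_mdeg by (auto simp: Mon_def)
  then have "finite (?g ` Mon n d)"
    by (rule finite_subset) (rule finite_lists_length_eq, simp)
  then show ?thesis using finite_imageD[OF _ inj] by blast
qed

lemma ex_mdvd_mdeg: "i \<le> mdeg c \<Longrightarrow> \<exists>b. mdvd b c \<and> mdeg b = i"
proof (induction i)
  case 0 then show ?case by (intro exI[of _ 0]) (auto simp: mdvd_def)
next
  case (Suc i)
  then obtain b where b: "mdvd b c" "mdeg b = i" by auto
  have "\<exists>k. lookup b k < lookup c k"
  proof (rule ccontr)
    assume "\<not> ?thesis"
    then have "b = c" using b(1) by (intro poly_mapping_eqI) (metis le_antisym not_less mdvd_def)
    then show False using b Suc.prems by simp
  qed
  then obtain k where k: "lookup b k < lookup c k" by auto
  show ?case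
    using b k by (intro exI[of _ "b + single k 1"]) (auto simp: mdvd_def lookup_add lookup_single when_def mdeg_add)
qed

section \<open>Ideals\<close>

definition mon_ideal :: "(nat \<Rightarrow>\<^sub>0 nat) set \<Rightarrow> 'k::zero mpoly set" where
  "mon_ideal U = {f. keys f \<subseteq> U}"

definition upclosed :: "nat \<Rightarrow> (nat \<Rightarrow>\<^sub>0 nat) set \<Rightarrow> bool" where
  "upclosed n U \<longleftrightarrow> U \<subseteq> Mons n \<and> (\<forall>a\<in>U. \<forall>c\<in>Mons n. a + c \<in> U)"

definition multiples :: "nat \<Rightarrow> (nat \<Rightarrow>\<^sub>0 nat) set \<Rightarrow> (nat \<Rightarrow>\<^sub>0 nat) set" where
  "multiples n S = {a\<in>Mons n. \<exists>s\<in>S. mdvd s a}"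

lemma keys_monom [simp]: "keys (monom a :: 'k::zero_neq_one mpoly) = {a}"
  by (simp add: monom_def)

lemma monom_mult: "(monom a :: 'k::comm_ring_1 mpoly) * monom b = monom (a + b)"
  by (simp add: monom_def mult_single)

lemma monom_inj: "(monom a :: 'k::zero_neq_one mpoly) = monom b \<longleftrightarrow> a = b"
  by (metis keys_monom singleton_inject)

lemma polyring_mult: "r \<in> polyring n \<Longrightarrow> f \<in> polyring n \<Longrightarrow> (r * f :: 'k::comm_ring_1 mpoly) \<in> polyring n"
  unfolding polyring_def
proof safe
  fix a i assume r: "\<forall>a\<in>keys r. keys a \<subseteq> {1..n}" and f: "\<forall>a\<in>keys f. keys a \<subseteq> {1..n}"
    and a: "a \<in> keys (r * f)" and i: "i \<in> keys a"
  obtain b c where "a = b + c" "b \<in> keys r" "c \<in> keys f" using keys_mult a by blast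
  then show "i \<in> {1..n}" using r f i keys_add[of b c] by blast
qed

lemma polyring_add: "f \<in> polyring n \<Longrightarrow> g \<in> polyring n \<Longrightarrow> f + g \<in> polyring n"
  using keys_add by (fastforce simp: polyring_def)

lemma polyring_diff: "f \<in> polyring n \<Longrightarrow> g \<in> polyring n \<Longrightarrow> (f - g :: 'k::ab_group_add mpoly) \<in> polyring n"
  using keys_diff by (fastforce simp: polyring_def)

lemma polyring_ideal: "is_ideal n (polyring n :: 'k::comm_ring_1 mpoly set)"
proof -
  have "(0::'k mpoly) \<in> polyring n" by (simp add: polyring_def)
  then show ?thesis unfolding is_ideal_def using polyring_add polyring_mult by blast
qed

lemma ideal_gen_superset: "G \<subseteq> ideal_gen n G"
  unfolding ideal_gen_def by auto

lemma ideal_gen_least: "is_ideal n I \<Longrightarrow> G \<subseteq> I \<Longrightarrow> ideal_gen n G \<subseteq> I"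
  unfolding ideal_gen_def by auto

lemma zero_mem_ideal_gen: "0 \<in> ideal_gen n G"
  unfolding ideal_gen_def is_ideal_def by blast

lemma ideal_gen_is_ideal:
  assumes "G \<subseteq> polyring n"
  shows "is_ideal n (ideal_gen n G :: 'k::comm_ring_1 mpoly set)"
proof -
  have ne: "polyring n \<in> {I. is_ideal n I \<and> G \<subseteq> I}" using assms polyring_ideal by blast
  have sub: "ideal_gen n G \<subseteq> polyring n" unfolding ideal_gen_def using ne by blast
  have add: "f + g \<in> ideal_gen n G" if f: "f \<in> ideal_gen n G" and g: "g \<in> ideal_gen n G" for f g
    unfolding ideal_gen_def
  proof (rule InterI)
    fix I assume I: "I \<in> {I. is_ideal n I \<and> G \<subseteq> I}"
    then have "is_ideal n I" "f \<in> I" "g \<in> I" using f g unfolding ideal_gen_def by blast+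
    then show "f + g \<in> I" unfolding is_ideal_def by blast
  qed
  have mul: "r * f \<in> ideal_gen n G" if f: "f \<in> ideal_gen n G" and r: "r \<in> polyring n" for f r
    unfolding ideal_gen_def
  proof (rule InterI)
    fix I assume I: "I \<in> {I. is_ideal n I \<and> G \<subseteq> I}"
    then have "is_ideal n I" "f \<in> I" using f unfolding ideal_gen_def by blast+
    then show "r * f \<in> I" using r unfolding is_ideal_def by blast
  qed
  show ?thesis unfolding is_ideal_def using sub add mul zero_mem_ideal_gen by blast
qed

lemma ideal_gen_mono: "G \<subseteq> polyring n \<Longrightarrow> G' \<subseteq> G \<Longrightarrow> ideal_gen n G' \<subseteq> (ideal_gen n G :: 'k::comm_ring_1 mpoly set)"
  by (rule ideal_gen_least[OF ideal_gen_is_ideal]) (use ideal_gen_superset in blast)+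

lemma ideal_gen_eqI:
  assumes "A \<subseteq> polyring n" "C \<subseteq> polyring n" "A \<subseteq> ideal_gen n C" "C \<subseteq> ideal_gen n A"
  shows "ideal_gen n A = (ideal_gen n C :: 'k::comm_ring_1 mpoly set)"
proof
  show "ideal_gen n A \<subseteq> ideal_gen n C" by (rule ideal_gen_least[OF ideal_gen_is_ideal[OF assms(2)] assms(3)])
  show "ideal_gen n C \<subseteq> ideal_gen n A" by (rule ideal_gen_least[OF ideal_gen_is_ideal[OF assms(1)] assms(4)])
qed

lemma ideal_sum_mem:
  assumes "is_ideal n K" "finite A" "\<And>x. x \<in> A \<Longrightarrow> f x \<in> K"
  shows "sum f A \<in> K"
  using assms(2,3)
proof (induction A rule: finite_induct)
  case empty then show ?case using assms(1) by (simp add: is_ideal_def)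
next
  case (insert x F) then show ?case using assms(1) by (simp add: is_ideal_def)
qed

lemma poly_eq_sum_single: "f = (\<Sum>a\<in>keys f. single a (lookup f a))"
proof (rule poly_mapping_eqI)
  fix k
  have "lookup (\<Sum>a\<in>keys f. single a (lookup f a)) k = (\<Sum>a\<in>keys f. if a = k then lookup f a else 0)"
    by (simp add: lookup_sum lookup_single when_def)
  also have "\<dots> = lookup f k"
    by (simp add: sum.delta in_keys_iff)
  finally show "lookup f k = lookup (\<Sum>a\<in>keys f. single a (lookup f a)) k" by simp
qed

lemma single_zero_polyring: "single 0 c \<in> polyring n"
  by (simp add: polyring_def)

lemma single_eq_const_times_monom: "single a c = single 0 c * (monom a :: 'k::comm_ring_1 mpoly)"
  by (simp add: monom_def mult_single)

lemma ideal_memI_monoms: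
  assumes K: "is_ideal n (K :: 'k::comm_ring_1 mpoly set)" and m: "\<And>a. a \<in> keys f \<Longrightarrow> monom a \<in> K"
  shows "f \<in> K"
proof -
  have "(\<Sum>a\<in>keys f. single a (lookup f a)) \<in> K"
  proof (rule ideal_sum_mem[OF K finite_keys])
    fix a assume "a \<in> keys f"
    have "single 0 (lookup f a) * monom a \<in> K"
      using K m[OF \<open>a \<in> keys f\<close>] single_zero_polyring unfolding is_ideal_def by blast
    then show "single a (lookup f a) \<in> K" by (simp only: single_eq_const_times_monom[symmetric])
  qed
  then show ?thesis using poly_eq_sum_single[of f] by simp
qed

lemma upclosed_multiples: "upclosed n (multiples n S)"
  unfolding upclosed_def
proof (intro conjI ballI)
  show "multiples n S \<subseteq> Mons n" by (auto simp: multiples_def)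
next
  fix a c assume a: "a \<in> multiples n S" and c: "c \<in> Mons n"
  then obtain s where "s \<in> S" "mdvd s a" "a \<in> Mons n" by (auto simp: multiples_def)
  then show "a + c \<in> multiples n S" using Mons_add[OF _ c] mdvd_add_mono unfolding multiples_def by blast
qed

lemma multiples_upclosed: assumes "upclosed n U" shows "multiples n U = U"
proof
  show "multiples n U \<subseteq> U"
  proof
    fix a assume "a \<in> multiples n U"
    then obtain s where s: "s \<in> U" "mdvd s a" "a \<in> Mons n" by (auto simp: multiples_def)
    have "s + (a - s) \<in> U" using assms s Mons_diff[OF s(3)] by (auto simp: upclosed_def)
    then show "a \<in> U" using mdvd_add_diff[OF s(2)] by simp
  qed
  show "U \<subseteq> multiples n U" unfolding multiples_def using assms mdvd_refl unfolding upclosed_def by blast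
qed

lemma subset_multiples: "S \<subseteq> Mons n \<Longrightarrow> S \<subseteq> multiples n S"
  unfolding multiples_def using mdvd_refl by blast

lemma upclosedI: "U \<subseteq> Mons n \<Longrightarrow> (\<And>a c. a \<in> U \<Longrightarrow> c \<in> Mons n \<Longrightarrow> a + c \<in> U) \<Longrightarrow> upclosed n U"
  unfolding upclosed_def by blast
lemma upclosed_Mons: "upclosed n U \<Longrightarrow> U \<subseteq> Mons n"
  unfolding upclosed_def by blast
lemma upclosedD: "upclosed n U \<Longrightarrow> a \<in> U \<Longrightarrow> c \<in> Mons n \<Longrightarrow> a + c \<in> U"
  unfolding upclosed_def by blast

lemma upclosed_Un: assumes "upclosed n A" "upclosed n B" shows "upclosed n (A \<union> B)"
proof (rule upclosedI)
  show "A \<union> B \<subseteq> Mons n" using upclosed_Mons[OF assms(1)] upclosed_Mons[OF assms(2)] by blast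
  fix a c assume "a \<in> A \<union> B" "c \<in> Mons n"
  then show "a + c \<in> A \<union> B" using upclosedD[OF assms(1)] upclosedD[OF assms(2)] by blast
qed

lemma upclosed_UN: assumes "\<And>d. upclosed n (A d)" shows "upclosed n (\<Union>d. A d)"
proof (rule upclosedI)
  show "(\<Union>d. A d) \<subseteq> Mons n" using upclosed_Mons[OF assms] by blast
  fix a c assume "a \<in> (\<Union>d. A d)" "c \<in> Mons n"
  then obtain d where "a \<in> A d" by blast
  then have "a + c \<in> A d" using upclosedD[OF assms] \<open>c \<in> Mons n\<close> by blast
  then show "a + c \<in> (\<Union>d. A d)" by blast
qed

lemma multiples_Un: "multiples n (A \<union> B) = multiples n A \<union> multiples n B"
  unfolding multiples_def by blast

lemma mon_ideal_polyring: "U \<subseteq> Mons n \<Longrightarrow> mon_ideal U \<subseteq> polyring n"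
  by (auto simp: mon_ideal_def polyring_def Mons_def)

lemma is_ideal_mon_ideal:
  assumes "upclosed n U" shows "is_ideal n (mon_ideal U :: 'k::comm_ring_1 mpoly set)"
  unfolding is_ideal_def
proof (intro conjI ballI)
  show "mon_ideal U \<subseteq> polyring n" using assms mon_ideal_polyring upclosed_def by blast
  show "0 \<in> mon_ideal U" by (simp add: mon_ideal_def)
next
  fix f g :: "'k mpoly" assume "f \<in> mon_ideal U" "g \<in> mon_ideal U"
  then show "f + g \<in> mon_ideal U" using keys_add[of f g] by (auto simp: mon_ideal_def)
next
  fix r f :: "'k mpoly" assume r: "r \<in> polyring n" and f: "f \<in> mon_ideal U"
  have "keys (r * f) \<subseteq> U"
  proof
    fix a assume "a \<in> keys (r * f)"
    then obtain b c where "a = b + c" "b \<in> keys r" "c \<in> keys f" using keys_mult by blast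
    moreover have "b \<in> Mons n" using r \<open>b \<in> keys r\<close> by (auto simp: polyring_def Mons_def)
    moreover have "c + b \<in> U" using assms f \<open>c \<in> keys f\<close> \<open>b \<in> Mons n\<close> by (auto simp: upclosed_def mon_ideal_def)
    ultimately show "a \<in> U" by (simp add: add.commute)
  qed
  then show "r * f \<in> mon_ideal U" by (simp add: mon_ideal_def)
qed

lemma monom_mem_mon_ideal: "(monom a :: 'k::zero_neq_one mpoly) \<in> mon_ideal U \<longleftrightarrow> a \<in> U"
  by (simp add: mon_ideal_def)

lemma ideal_gen_eq_mon_ideal:
  assumes S: "S \<subseteq> Mons n" and A1: "monom ` S \<subseteq> A" and A2: "A \<subseteq> mon_ideal (multiples n S)"
  shows "ideal_gen n A = (mon_ideal (multiples n S) :: 'k::comm_ring_1 mpoly set)"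
proof
  show "ideal_gen n A \<subseteq> mon_ideal (multiples n S)"
    using ideal_gen_least[OF is_ideal_mon_ideal[OF upclosed_multiples] A2] .
  show "mon_ideal (multiples n S) \<subseteq> ideal_gen n A"
  proof
    fix f :: "'k mpoly" assume f: "f \<in> mon_ideal (multiples n S)"
    show "f \<in> ideal_gen n A" unfolding ideal_gen_def
    proof
      fix K assume "K \<in> {I. is_ideal n I \<and> A \<subseteq> I}"
      then have K: "is_ideal n K" "A \<subseteq> K" by auto
      show "f \<in> K"
      proof (rule ideal_memI_monoms[OF K(1)])
        fix a assume "a \<in> keys f"
        then have a: "a \<in> multiples n S" using f by (auto simp: mon_ideal_def)
        then obtain s where s: "s \<in> S" "mdvd s a" "a \<in> Mons n" by (auto simp: multiples_def)
        have "monom a = monom (a - s) * (monom s :: 'k mpoly)"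
          using mdvd_add_diff[OF s(2)] by (simp add: monom_mult add.commute)
        moreover have "monom (a - s) \<in> (polyring n :: 'k mpoly set)"
          using s(3) keys_diff_subset[of a s] by (auto simp: polyring_def Mons_def)
        moreover have "monom s \<in> K" using s(1) A1 K(2) by auto
        ultimately show "monom a \<in> K" using K(1) by (simp add: is_ideal_def)
      qed
    qed
  qed
qed

lemma ideal_gen_mon_ideal: assumes "upclosed n U" shows "ideal_gen n (mon_ideal U) = (mon_ideal U :: 'k::comm_ring_1 mpoly set)"
proof -
  have "monom ` U \<subseteq> (mon_ideal U :: 'k mpoly set)" by (auto simp: mon_ideal_def)
  then show ?thesis using ideal_gen_eq_mon_ideal[of U n "mon_ideal U"] multiples_upclosed[OF assms] assms by (simp add: upclosed_def)
qed

section \<open>Dimensions\<close>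

lemma kscale_eq: "kscale c f = single 0 c * f"
  by (simp add: kscale_def mult_map_scale_conv_mult)

lemma vector_space_kscale: "vector_space (kscale :: 'k::field \<Rightarrow> 'k mpoly \<Rightarrow> 'k mpoly)"
  by unfold_locales (simp_all add: kscale_eq distrib_left single_add distrib_right mult.assoc[symmetric] mult_single)

lemma lookup_kscale: "lookup (kscale c f) a = c * lookup f a"
  by (simp add: kscale_eq mult_map_scale_conv_mult[symmetric] map.rep_eq when_def)

lemma dimK_supported:
  assumes T: "finite T"
  shows "dimK {f :: 'k::field mpoly. keys f \<subseteq> T} = card T"
proof -
  interpret v: vector_space "kscale :: 'k \<Rightarrow> 'k mpoly \<Rightarrow> 'k mpoly" by (rule vector_space_kscale)
  let ?V = "{f :: 'k mpoly. keys f \<subseteq> T}"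
  let ?B = "monom ` T :: 'k mpoly set"
  have sub: "?B \<subseteq> ?V" by auto
  have span: "?V \<subseteq> v.span ?B"
  proof
    fix f assume f: "f \<in> ?V"
    have "(\<Sum>a\<in>keys f. kscale (lookup f a) (monom a)) \<in> v.span ?B"
      using f by (intro v.span_sum v.span_scale v.span_base) auto
    moreover have "(\<Sum>a\<in>keys f. kscale (lookup f a) (monom a)) = (\<Sum>a\<in>keys f. single a (lookup f a))"
      by (simp add: kscale_eq single_eq_const_times_monom[symmetric])
    moreover have "(\<Sum>a\<in>keys f. single a (lookup f a)) = f" by (rule poly_eq_sum_single[symmetric])
    ultimately show "f \<in> v.span ?B" by simp
  qed
  have inj: "inj_on (monom :: _ \<Rightarrow> 'k mpoly) T" by (auto simp: inj_on_def monom_inj)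
  have indep: "v.independent ?B"
  proof (rule v.independent_if_scalars_zero)
    show "finite ?B" using T by simp
  next
    fix g x assume s: "(\<Sum>x\<in>?B. kscale (g x) x) = 0" and x: "x \<in> ?B"
    then obtain a0 where a0: "a0 \<in> T" "x = monom a0" by auto
    have "0 = lookup (\<Sum>x\<in>?B. kscale (g x) x) a0" using s by simp
    also have "\<dots> = (\<Sum>x\<in>?B. g x * lookup x a0)" by (simp add: lookup_sum lookup_kscale)
    also have "\<dots> = (\<Sum>a\<in>T. g (monom a) * lookup (monom a :: 'k mpoly) a0)"
      by (simp add: sum.reindex[OF inj])
    also have "\<dots> = (\<Sum>a\<in>T. if a = a0 then g (monom a) else 0)"
      by (intro sum.cong) (auto simp: monom_def lookup_single when_def)
    also have "\<dots> = g x" using a0 T by simp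
    finally show "g x = 0" by simp
  qed
  have "card ?B = v.dim ?V" by (rule v.basis_card_eq_dim[OF sub span indep])
  moreover have "card ?B = card T" using card_image[OF inj] .
  ultimately show ?thesis by (simp add: dimK_def)
qed

lemma hilb_mon_ideal: "hilb n (mon_ideal U :: 'k::field mpoly set) d = card (Mon n d - U)"
proof -
  have h: "(hom n d :: 'k mpoly set) = {f. keys f \<subseteq> Mon n d}" by (simp add: hom_def)
  have i: "mon_ideal U \<inter> {f :: 'k mpoly. keys f \<subseteq> Mon n d} = {f. keys f \<subseteq> Mon n d \<inter> U}" by (auto simp: mon_ideal_def)
  have "hilb n (mon_ideal U :: 'k::field mpoly set) d = dimK {f :: 'k mpoly. keys f \<subseteq> Mon n d} - dimK {f :: 'k mpoly. keys f \<subseteq> Mon n d \<inter> U}"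
    by (simp only: hilb_def h i)
  also have "\<dots> = card (Mon n d) - card (Mon n d \<inter> U)"
    using dimK_supported[of "Mon n d", where 'k='k] dimK_supported[of "Mon n d \<inter> U", where 'k='k] finite_Mon by simp
  finally show ?thesis by (simp add: finite_Mon card_Diff_subset_Int)
qed

section \<open>Orders and top segments\<close>

definition strict_total_on :: "('a \<Rightarrow> 'a \<Rightarrow> bool) \<Rightarrow> 'a set \<Rightarrow> bool" where
  "strict_total_on gt S \<longleftrightarrow> (\<forall>a\<in>S. \<not> gt a a) \<and> (\<forall>a\<in>S. \<forall>b\<in>S. \<forall>c\<in>S. gt a b \<longrightarrow> gt b c \<longrightarrow> gt a c)
     \<and> (\<forall>a\<in>S. \<forall>b\<in>S. a \<noteq> b \<longrightarrow> gt a b \<or> gt b a)"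

lemma strict_total_on_irrefl: "strict_total_on gt S \<Longrightarrow> a \<in> S \<Longrightarrow> \<not> gt a a"
  unfolding strict_total_on_def by blast
lemma strict_total_on_trans: "strict_total_on gt S \<Longrightarrow> a \<in> S \<Longrightarrow> b \<in> S \<Longrightarrow> c \<in> S \<Longrightarrow> gt a b \<Longrightarrow> gt b c \<Longrightarrow> gt a c"
  unfolding strict_total_on_def by blast
lemma strict_total_on_total: "strict_total_on gt S \<Longrightarrow> a \<in> S \<Longrightarrow> b \<in> S \<Longrightarrow> a \<noteq> b \<Longrightarrow> gt a b \<or> gt b a"
  unfolding strict_total_on_def by blast

lemma strict_total_on_subset: assumes "strict_total_on gt S" "T \<subseteq> S" shows "strict_total_on gt T"
  unfolding strict_total_on_def
proof (intro conjI ballI impI)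
  fix a assume "a \<in> T" then show "\<not> gt a a" using strict_total_on_irrefl[OF assms(1)] assms(2) by blast
next
  fix a b c assume "a \<in> T" "b \<in> T" "c \<in> T" "gt a b" "gt b c"
  then show "gt a c" using strict_total_on_trans[OF assms(1)] assms(2) by blast
next
  fix a b assume "a \<in> T" "b \<in> T" "a \<noteq> b"
  then show "gt a b \<or> gt b a" using strict_total_on_total[OF assms(1)] assms(2) by blast
qed

lemma top_subset: "top gt r S \<subseteq> S"
  by (auto simp: top_def)

lemma top_upward:
  assumes "finite S" "strict_total_on gt S" "a \<in> top gt r S" "b \<in> S" "gt b a"
  shows "b \<in> top gt r S"
proof -
  have a: "a \<in> S" "card {c\<in>S. gt c a} < r" using assms(3) by (auto simp: top_def)
  have "{c\<in>S. gt c b} \<subseteq> {c\<in>S. gt c a}" using strict_total_on_trans[OF assms(2) _ assms(4) a(1) _ assms(5)] by blast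
  then have "card {c\<in>S. gt c b} \<le> card {c\<in>S. gt c a}" using assms(1) by (intro card_mono) auto
  then show ?thesis using a assms(4) by (auto simp: top_def)
qed

lemma card_greater_less:
  assumes S: "finite S" and o: "strict_total_on gt S" and xy: "x \<in> S" "y \<in> S" "gt x y"
  shows "card {c\<in>S. gt c x} < card {c\<in>S. gt c y}"
proof (rule psubset_card_mono)
  show "finite {c\<in>S. gt c y}" using S by simp
  have "{c\<in>S. gt c x} \<subseteq> {c\<in>S. gt c y}"
    using strict_total_on_trans[OF o _ xy(1,2) _ xy(3)] by blast
  moreover have "x \<in> {c\<in>S. gt c y} - {c\<in>S. gt c x}"
    using xy strict_total_on_irrefl[OF o xy(1)] by simp
  ultimately show "{c\<in>S. gt c x} \<subset> {c\<in>S. gt c y}" by blast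
qed

lemma bij_betw_card_greater:
  assumes S: "finite S" and o: "strict_total_on gt S"
  shows "bij_betw (\<lambda>a. card {b\<in>S. gt b a}) S {..<card S}"
proof -
  let ?rk = "\<lambda>a. card {b\<in>S. gt b a}"
  have inj: "inj_on ?rk S"
  proof (rule inj_onI, rule ccontr)
    fix a b assume ab: "a \<in> S" "b \<in> S" "?rk a = ?rk b" "a \<noteq> b"
    then show False
      using strict_total_on_total[OF o ab(1,2,4)] card_greater_less[OF S o, of a b]
        card_greater_less[OF S o, of b a] by auto
  qed
  have "?rk a < card S" if a: "a \<in> S" for a
  proof -
    have "{c\<in>S. gt c a} \<subseteq> S - {a}" using strict_total_on_irrefl[OF o a] by blast
    then have "?rk a \<le> card (S - {a})" using S by (simp add: card_mono)
    also have "\<dots> < card S" by (rule card_Diff1_less[OF S a])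
    finally show ?thesis .
  qed
  then have "?rk ` S \<subseteq> {..<card S}" by auto
  moreover have "card (?rk ` S) = card {..<card S}" using card_image[OF inj] by simp
  ultimately have "?rk ` S = {..<card S}" by (intro card_subset_eq) auto
  then show ?thesis using inj by (simp add: bij_betw_def)
qed

lemma card_top:
  assumes S: "finite S" and o: "strict_total_on gt S" and r: "r \<le> card S"
  shows "card (top gt r S) = r"
proof -
  let ?rk = "\<lambda>a. card {b\<in>S. gt b a}"
  have bij: "bij_betw ?rk S {..<card S}" by (rule bij_betw_card_greater[OF S o])
  have "?rk ` top gt r S = {..<r}"
  proof
    show "?rk ` top gt r S \<subseteq> {..<r}" by (auto simp: top_def)
    show "{..<r} \<subseteq> ?rk ` top gt r S"
    proof
      fix x assume x: "x \<in> {..<r}"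
      then have "x \<in> ?rk ` S" using bij r by (auto simp: bij_betw_def)
      then show "x \<in> ?rk ` top gt r S" using x by (auto simp: top_def)
    qed
  qed
  moreover have "inj_on ?rk (top gt r S)"
    using inj_on_subset[OF bij_betw_imp_inj_on[OF bij] top_subset] .
  ultimately show ?thesis by (metis card_image card_lessThan)
qed

lemma strict_total_lex: "strict_total_on lex_gt S"
  unfolding strict_total_on_def
proof (intro conjI ballI impI)
  fix a assume "a \<in> S" show "\<not> lex_gt a a" by (simp add: lex_gt_def)
next
  fix a b c assume "lex_gt a b" "lex_gt b c"
  then obtain i j where i: "lookup b i < lookup a i" "\<forall>k<i. lookup a k = lookup b k"
    and j: "lookup c j < lookup b j" "\<forall>k<j. lookup b k = lookup c k" by (auto simp: lex_gt_def)
  show "lex_gt a c" unfolding lex_gt_def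
  proof (cases i j rule: linorder_cases)
    case less then show "\<exists>i. lookup c i < lookup a i \<and> (\<forall>j<i. lookup a j = lookup c j)"
      using i j by (intro exI[of _ i]) auto
  next
    case equal then show "\<exists>i. lookup c i < lookup a i \<and> (\<forall>j<i. lookup a j = lookup c j)"
      using i j by (intro exI[of _ i]) auto
  next
    case greater then show "\<exists>i. lookup c i < lookup a i \<and> (\<forall>j<i. lookup a j = lookup c j)"
      using i j by (intro exI[of _ j]) auto
  qed
next
  fix a b :: "nat \<Rightarrow>\<^sub>0 nat" assume "a \<noteq> b"
  then have ne: "{i. lookup a i \<noteq> lookup b i} \<noteq> {}" by (metis (mono_tags) empty_Collect_eq poly_mapping_eqI)
  define i where "i = (LEAST i. lookup a i \<noteq> lookup b i)"
  have i: "lookup a i \<noteq> lookup b i" using ne unfolding i_def by (metis (mono_tags) LeastI empty_Collect_eq)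
  have lt: "\<forall>k<i. lookup a k = lookup b k" unfolding i_def using not_less_Least by blast
  show "lex_gt a b \<or> lex_gt b a"
  proof (cases "lookup a i < lookup b i")
    case True then have "lex_gt b a" using lt unfolding lex_gt_def by (metis)
    then show ?thesis ..
  next
    case False then have "lex_gt a b" using lt i unfolding lex_gt_def by (metis linorder_neqE_nat)
    then show ?thesis ..
  qed
qed

lemma strict_total_revlex_Mon: "strict_total_on revlex_gt (Mon n d)"
  unfolding strict_total_on_def
proof (intro conjI ballI impI)
  fix a assume "a \<in> Mon n d" show "\<not> revlex_gt a a" by (simp add: revlex_gt_def)
next
  fix a b c assume abc: "a \<in> Mon n d" "b \<in> Mon n d" "c \<in> Mon n d" and "revlex_gt a b" "revlex_gt b c"
  then obtain i j where i: "lookup a i < lookup b i" "\<forall>k>i. lookup a k = lookup b k"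
    and j: "lookup b j < lookup c j" "\<forall>k>j. lookup b k = lookup c k" by (auto simp: revlex_gt_def Mon_def)
  have ex: "\<exists>i. lookup a i < lookup c i \<and> (\<forall>j>i. lookup a j = lookup c j)"
  proof (cases i j rule: linorder_cases)
    case less then show ?thesis using i j by (intro exI[of _ j]) auto
  next
    case equal then show ?thesis using i j by (intro exI[of _ i]) auto
  next
    case greater then show ?thesis using i j by (intro exI[of _ i]) auto
  qed
  then show "revlex_gt a c" using abc by (auto simp: revlex_gt_def Mon_def)
next
  fix a b assume ab: "a \<in> Mon n d" "b \<in> Mon n d" "a \<noteq> b"
  then have ne: "{i. lookup a i \<noteq> lookup b i} \<noteq> {}" by (metis (mono_tags) empty_Collect_eq poly_mapping_eqI)
  have fin: "finite {i. lookup a i \<noteq> lookup b i}"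
    by (rule finite_subset[of _ "keys a \<union> keys b"]) (auto simp: in_keys_iff)
  define i where "i = Max {i. lookup a i \<noteq> lookup b i}"
  have i: "lookup a i \<noteq> lookup b i" using Max_in[OF fin ne] unfolding i_def by simp
  have gt: "\<forall>k>i. lookup a k = lookup b k" unfolding i_def using Max_ge[OF fin] by (metis (mono_tags) mem_Collect_eq not_le)
  have deq: "mdeg a = mdeg b" using ab by (simp add: Mon_def)
  show "revlex_gt a b \<or> revlex_gt b a"
  proof (cases "lookup a i < lookup b i")
    case True then have "revlex_gt a b" using gt deq unfolding revlex_gt_def by metis
    then show ?thesis ..
  next
    case False then have "revlex_gt b a" using gt i deq unfolding revlex_gt_def by (metis linorder_neqE_nat)
    then show ?thesis ..
  qed
qed

lemma revlex_gt_last_var: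
  assumes "a \<in> Mon n d" "b \<in> Mon n d" "lookup a n = 0" "0 < lookup b n"
  shows "revlex_gt a b"
proof -
  have "\<forall>j>n. lookup a j = lookup b j"
  proof (intro allI impI)
    fix j assume "n < j"
    then have "j \<notin> keys a" "j \<notin> keys b" using assms(1,2) by (auto simp: Mon_def)
    then show "lookup a j = lookup b j" by (simp add: in_keys_iff)
  qed
  then have "\<exists>i. lookup a i < lookup b i \<and> (\<forall>j>i. lookup a j = lookup b j)" using assms(3,4) by (intro exI[of _ n]) simp
  then show ?thesis using assms(1,2) unfolding revlex_gt_def Mon_def by auto
qed

section \<open>The staged monomial sets\<close>

fun wmons :: "nat \<Rightarrow> nat list \<Rightarrow> (nat \<Rightarrow>\<^sub>0 nat) set \<Rightarrow> nat \<Rightarrow> (nat \<Rightarrow>\<^sub>0 nat) set" where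
  "wmons n h U0 0 = U0"
| "wmons n h U0 (Suc d) = wmons n h U0 d \<union>
     multiples n (top revlex_gt (card (Mon n d - wmons n h U0 d) - hv h d) (Mon n d - wmons n h U0 d))"

definition wnew :: "nat \<Rightarrow> nat list \<Rightarrow> (nat \<Rightarrow>\<^sub>0 nat) set \<Rightarrow> nat \<Rightarrow> (nat \<Rightarrow>\<^sub>0 nat) set" where
  "wnew n h U0 d = top revlex_gt (card (Mon n d - wmons n h U0 d) - hv h d) (Mon n d - wmons n h U0 d)"

lemma wmons_Suc: "wmons n h U0 (Suc d) = wmons n h U0 d \<union> multiples n (wnew n h U0 d)"
  by (simp add: wnew_def)

declare wmons.simps(2) [simp del]

lemma wnew_subset: "wnew n h U0 d \<subseteq> Mon n d - wmons n h U0 d"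
  unfolding wnew_def by (rule top_subset)

lemma card_wnew: "card (wnew n h U0 d) = card (Mon n d - wmons n h U0 d) - hv h d"
  unfolding wnew_def
  by (rule card_top) (auto intro: strict_total_on_subset[OF strict_total_revlex_Mon] simp: finite_Mon)

lemma wnew_Mons: "wnew n h U0 d \<subseteq> Mons n"
  using wnew_subset Mon_Mons by blast

lemma wnew_multiples: "wnew n h U0 d \<subseteq> multiples n (wnew n h U0 d)"
  by (rule subset_multiples[OF wnew_Mons])

lemma wnew_wmons_Suc: "wnew n h U0 d \<subseteq> wmons n h U0 (Suc d)"
  using wnew_multiples[of n h U0 d] unfolding wmons_Suc by blast

text \<open>Every \<open>x_n\<close>-free monomial is rev-lex larger than every monomial of the same degree
  divisible by \<open>x_n\<close>, so it is added no later than such a monomial.\<close>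

lemma free_mem_wmons_Suc:
  assumes t: "t \<in> wnew n h U0 D" "lookup t n \<noteq> 0" and b: "b \<in> Mon n D" "lookup b n = 0"
  shows "b \<in> wmons n h U0 (Suc D)"
proof (cases "b \<in> wmons n h U0 D")
  case True then show ?thesis by (simp add: wmons_Suc)
next
  case False
  let ?S = "Mon n D - wmons n h U0 D"
  have tS: "t \<in> ?S" using wnew_subset t(1) by blast
  have "b \<in> wnew n h U0 D" unfolding wnew_def
  proof (rule top_upward)
    show "finite ?S" by (simp add: finite_Mon)
    show "strict_total_on revlex_gt ?S" by (rule strict_total_on_subset[OF strict_total_revlex_Mon]) blast
    show "t \<in> top revlex_gt (card ?S - hv h D) ?S" using t(1) by (simp add: wnew_def)
    show "b \<in> ?S" using b False by blast
    show "revlex_gt b t" using revlex_gt_last_var[OF b(1) _ b(2)] tS t(2) by simp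
  qed
  then show ?thesis using wnew_wmons_Suc by blast
qed

lemma upclosed_wmons: assumes "upclosed n U0" shows "upclosed n (wmons n h U0 d)"
proof (induction d)
  case 0 then show ?case using assms by simp
next
  case (Suc d) then show ?case unfolding wmons_Suc by (rule upclosed_Un[OF _ upclosed_multiples])
qed

lemma wmons_mono: "d \<le> d' \<Longrightarrow> wmons n h U0 d \<subseteq> wmons n h U0 d'"
proof (induction d' rule: dec_induct)
  case base then show ?case by simp
next
  case (step k) then show ?case by (auto simp: wmons_Suc)
qed

lemma wstage_eq_mon_ideal:
  assumes U0: "upclosed n U0"
  shows "wstage n h (mon_ideal U0 :: 'k::field mpoly set) d = mon_ideal (wmons n h U0 d)"
proof (induction d)
  case 0 then show ?case by simp
next
  case (Suc d)
  let ?U = "wmons n h U0 d"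
  let ?T = "wnew n h U0 d"
  have upcU: "upclosed n ?U" by (rule upclosed_wmons[OF U0])
  have set_eq: "{a \<in> Mon n d. (monom a :: 'k mpoly) \<notin> mon_ideal ?U} = Mon n d - ?U"
    by (auto simp: monom_mem_mon_ideal)
  have hl: "hilb n (mon_ideal ?U :: 'k mpoly set) d = card (Mon n d - ?U)" by (rule hilb_mon_ideal)
  have "wstage n h (mon_ideal U0 :: 'k mpoly set) (Suc d) = ideal_gen n (mon_ideal ?U \<union> monom ` ?T)"
    using Suc.IH by (simp add: Let_def set_eq hl wnew_def)
  also have "\<dots> = mon_ideal (multiples n (?U \<union> ?T))"
  proof (rule ideal_gen_eq_mon_ideal)
    show "?U \<union> ?T \<subseteq> Mons n" using upcU wnew_subset[of n h U0 d] Mon_Mons by (auto simp: upclosed_def)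
    show "monom ` (?U \<union> ?T) \<subseteq> (mon_ideal ?U \<union> monom ` ?T :: 'k mpoly set)" by (auto simp: monom_mem_mon_ideal)
    have "?U \<subseteq> multiples n (?U \<union> ?T)" using multiples_upclosed[OF upcU] multiples_Un by blast
    moreover have "?T \<subseteq> multiples n (?U \<union> ?T)" using wnew_multiples[of n h U0 d] multiples_Un by blast
    ultimately show "(mon_ideal ?U \<union> monom ` ?T :: 'k mpoly set) \<subseteq> mon_ideal (multiples n (?U \<union> ?T))"
      by (auto simp: mon_ideal_def monom_def)
  qed
  also have "multiples n (?U \<union> ?T) = wmons n h U0 (Suc d)"
    by (simp add: wmons_Suc multiples_Un multiples_upclosed[OF upcU])
  finally show ?case .
qed

lemma finite_subset_chain:
  fixes A :: "nat \<Rightarrow> 'a set"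
  assumes "finite F" "F \<subseteq> (\<Union>d. A d)" "\<And>d d'. d \<le> d' \<Longrightarrow> A d \<subseteq> A d'"
  shows "\<exists>d. F \<subseteq> A d"
  using assms(1,2)
proof (induction F rule: finite_induct)
  case empty then show ?case by simp
next
  case (insert x F)
  then obtain d where d: "F \<subseteq> A d" by auto
  obtain d' where d': "x \<in> A d'" using insert.prems by auto
  have "A d \<subseteq> A (max d d')" by (rule assms(3)) simp
  moreover have "A d' \<subseteq> A (max d d')" by (rule assms(3)) simp
  ultimately have "F \<subseteq> A (max d d')" "x \<in> A (max d d')" using d d' by blast+
  then show ?case by blast
qed

definition wmons_lim :: "nat \<Rightarrow> nat list \<Rightarrow> (nat \<Rightarrow>\<^sub>0 nat) set \<Rightarrow> (nat \<Rightarrow>\<^sub>0 nat) set" where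
  "wmons_lim n h U0 = (\<Union>d. wmons n h U0 d)"

lemma upclosed_wmons_lim: "upclosed n U0 \<Longrightarrow> upclosed n (wmons_lim n h U0)"
  unfolding wmons_lim_def by (intro upclosed_UN upclosed_wmons)

lemma wmons_subset_lim: "wmons n h U0 d \<subseteq> wmons_lim n h U0"
  unfolding wmons_lim_def by blast

lemma UN_wstage_eq_mon_ideal:
  assumes U0: "upclosed n U0"
  shows "(\<Union>d. wstage n h (mon_ideal U0 :: 'k::field mpoly set) d) = mon_ideal (wmons_lim n h U0)"
proof
  show "(\<Union>d. wstage n h (mon_ideal U0 :: 'k mpoly set) d) \<subseteq> mon_ideal (wmons_lim n h U0)"
  proof
    fix f assume "f \<in> (\<Union>d. wstage n h (mon_ideal U0 :: 'k mpoly set) d)"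
    then obtain d where "f \<in> wstage n h (mon_ideal U0 :: 'k mpoly set) d" by blast
    then have "f \<in> mon_ideal (wmons n h U0 d)" by (simp only: wstage_eq_mon_ideal[OF U0])
    then show "f \<in> mon_ideal (wmons_lim n h U0)" using wmons_subset_lim[of n h U0 d] unfolding mon_ideal_def by blast
  qed
  show "mon_ideal (wmons_lim n h U0) \<subseteq> (\<Union>d. wstage n h (mon_ideal U0 :: 'k mpoly set) d)"
  proof
    fix f :: "'k mpoly" assume "f \<in> mon_ideal (wmons_lim n h U0)"
    then have "keys f \<subseteq> (\<Union>d. wmons n h U0 d)" by (simp add: mon_ideal_def wmons_lim_def)
    from finite_subset_chain[OF finite_keys this wmons_mono]
    obtain d where "keys f \<subseteq> wmons n h U0 d" by blast
    then have "f \<in> mon_ideal (wmons n h U0 d)" by (simp add: mon_ideal_def)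
    then have "f \<in> wstage n h (mon_ideal U0 :: 'k mpoly set) d" by (simp only: wstage_eq_mon_ideal[OF U0])
    then show "f \<in> (\<Union>d. wstage n h (mon_ideal U0 :: 'k mpoly set) d)" by blast
  qed
qed

lemma card_standard_wmons_lim: "card (Mon n j - wmons_lim n h U0) \<le> hv h j"
proof -
  let ?U = "wmons n h U0 j" and ?T = "wnew n h U0 j" and ?M = "Mon n j"
  have "?M - wmons_lim n h U0 \<subseteq> (?M - ?U) - ?T"
  proof -
    have "?T \<subseteq> wmons n h U0 (Suc j)" by (rule wnew_wmons_Suc)
    then show ?thesis using wmons_subset_lim[of n h U0 "Suc j"] wmons_subset_lim[of n h U0 j] by blast
  qed
  then have "card (?M - wmons_lim n h U0) \<le> card ((?M - ?U) - ?T)"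
    by (intro card_mono) (auto simp: finite_Mon)
  also have "\<dots> = card (?M - ?U) - card ?T"
    using wnew_subset[of n h U0 j] by (intro card_Diff_subset) (auto intro: finite_subset[OF _ finite_Mon])
  also have "\<dots> \<le> hv h j" by (simp add: card_wnew)
  finally show ?thesis .
qed

lemma Lex_eq_mon_ideal:
  fixes g :: "nat list"
  defines "N \<equiv> hv g 1"
  defines "S \<equiv> (\<Union>d. top lex_gt (card (Mon N d) - hv g d) (Mon N d))"
  shows "(Lex g :: 'k::field mpoly set) = mon_ideal (multiples N S)"
proof -
  have SM: "S \<subseteq> Mons N" unfolding S_def using top_subset Mon_Mons by fastforce
  have "(Lex g :: 'k mpoly set) = ideal_gen N (monom ` S)"
    unfolding Lex_def Let_def N_def[symmetric] S_def by (simp add: image_UN)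
  also have "\<dots> = mon_ideal (multiples N S)"
  proof (rule ideal_gen_eq_mon_ideal[OF SM])
    show "(monom ` S :: 'k mpoly set) \<subseteq> mon_ideal (multiples N S)" using subset_multiples[OF SM] by (auto simp: mon_ideal_def)
  qed simp
  finally show ?thesis .
qed

lemma card_standard_Lex:
  fixes g :: "nat list"
  defines "N \<equiv> hv g 1"
  defines "S \<equiv> (\<Union>d. top lex_gt (card (Mon N d) - hv g d) (Mon N d))"
  shows "card (Mon N j - multiples N S) \<le> hv g j"
proof -
  let ?T = "top lex_gt (card (Mon N j) - hv g j) (Mon N j)"
  have "?T \<subseteq> multiples N S" using subset_multiples[of S N] top_subset Mon_Mons unfolding S_def by fastforce
  then have "card (Mon N j - multiples N S) \<le> card (Mon N j - ?T)"
    by (intro card_mono) (auto simp: finite_Mon)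
  also have "\<dots> = card (Mon N j) - card ?T"
    by (intro card_Diff_subset top_subset) (auto intro: finite_subset[OF top_subset finite_Mon])
  also have "card ?T = card (Mon N j) - hv g j"
    by (rule card_top) (auto simp: finite_Mon strict_total_lex)
  finally show ?thesis by simp
qed

lemma unimodal_at_unique:
  assumes "unimodal_at h k" "unimodal_at h k'" shows "k = k'"
proof (rule ccontr)
  assume ne: "k \<noteq> k'"
  have *: False if "unimodal_at h a" "unimodal_at h b" "a < b" for a b
  proof -
    have "h ! a < h ! Suc a" using that unfolding unimodal_at_def by blast
    moreover have "Suc a < length h" using that unfolding unimodal_at_def by auto
    then have "h ! Suc a \<le> h ! a" using that(1) unfolding unimodal_at_def by blast
    ultimately show False by simp
  qed
  show False using ne * assms by (metis linorder_neqE_nat)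
qed

lemma Delta_eq: "unimodal_at h k \<Longrightarrow> Delta h = 1 # map (\<lambda>i. h ! i - h ! (i - 1)) [1..<Suc k]"
  unfolding Delta_def Let_def using unimodal_at_unique by (metis (mono_tags) the_equality)

lemma hv_Delta:
  assumes "unimodal_at h k"
  shows "hv (Delta h) j = (if j = 0 then 1 else if j \<le> k then h ! j - h ! (j - 1) else 0)"
proof -
  have len: "length (Delta h) = Suc k" using Delta_eq[OF assms] by simp
  show ?thesis
  proof (cases j)
    case 0 then show ?thesis using Delta_eq[OF assms] by (simp add: hv_def)
  next
    case (Suc j')
    show ?thesis
    proof (cases "j \<le> k")
      case True
      then have "Delta h ! j = h ! j - h ! (j - 1)" using Delta_eq[OF assms] Suc by (simp add: nth_Cons del: upt_Suc)
      then show ?thesis using True len Suc by (simp add: hv_def)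
    next
      case False then show ?thesis using len Suc by (simp add: hv_def)
    qed
  qed
qed

lemma hv_Delta_1:
  assumes "unimodal_at h k" "h ! 0 = 1"
  shows "hv (Delta h) 1 = hv h 1 - 1"
proof (cases "k \<ge> 1")
  case True
  then have "1 < length h" using assms(1) unfolding unimodal_at_def by auto
  then show ?thesis using hv_Delta[OF assms(1), of 1] True assms(2) by (simp add: hv_def)
next
  case False
  then have k0: "k = 0" by simp
  show ?thesis
  proof (cases "1 < length h")
    case True
    then have "h ! 1 \<le> h ! 0" using assms(1) k0 unfolding unimodal_at_def by auto
    then show ?thesis using hv_Delta[OF assms(1), of 1] k0 True assms(2) by (simp add: hv_def)
  next
    case False then show ?thesis using hv_Delta[OF assms(1), of 1] k0 by (simp add: hv_def)
  qed
qed

lemma sum_hv_Delta: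
  assumes "unimodal_at h k" "h ! 0 = 1" "j \<le> k"
  shows "(\<Sum>i\<le>j. hv (Delta h) i) = hv h j"
  using assms(3)
proof (induction j)
  case 0
  have "0 < length h" using assms(1) unfolding unimodal_at_def by auto
  then show ?case using hv_Delta[OF assms(1), of 0] assms(2) by (simp add: hv_def)
next
  case (Suc j)
  have lt: "Suc j < length h" using Suc.prems assms(1) unfolding unimodal_at_def by auto
  have inc: "h ! j < h ! Suc j" using Suc.prems assms(1) unfolding unimodal_at_def by auto
  have "(\<Sum>i\<le>Suc j. hv (Delta h) i) = hv h j + (h ! Suc j - h ! j)"
    using Suc hv_Delta[OF assms(1), of "Suc j"] by simp
  also have "\<dots> = h ! Suc j" using inc lt by (simp add: hv_def)
  finally show ?case using lt by (simp add: hv_def)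
qed

lemma sum_Delta_le_or_zero:
  assumes "unimodal_at h k" "h ! 0 = 1"
  shows "(\<Sum>i\<le>d. hv (Delta h) i) \<le> hv h d \<or> hv (Delta h) d = 0"
proof (cases "d \<le> k")
  case True then show ?thesis using sum_hv_Delta[OF assms True] by simp
next
  case False then show ?thesis using hv_Delta[OF assms(1), of d] by simp
qed

lemma Mons_Suc_lookup_zero: assumes "a \<in> Mons (Suc n')" "lookup a (Suc n') = 0" shows "a \<in> Mons n'"
proof -
  have "keys a \<subseteq> {1..n'}"
  proof
    fix i assume i: "i \<in> keys a"
    then have "i \<in> {1..Suc n'}" using assms(1) by (auto simp: Mons_def)
    moreover have "i \<noteq> Suc n'" using i assms(2) by (auto simp: in_keys_iff)
    ultimately show "i \<in> {1..n'}" by auto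
  qed
  then show ?thesis by (simp add: Mons_def)
qed

lemma Mons_mono: "n' \<le> n \<Longrightarrow> Mons n' \<subseteq> Mons n"
  unfolding Mons_def by auto

lemma lookup_Mons_above: assumes "a \<in> Mons n'" "n' < i" shows "lookup a i = 0"
proof -
  have "i \<notin> keys a" using assms by (auto simp: Mons_def)
  then show ?thesis by (simp add: in_keys_iff)
qed

lemma Mon_mono: "n' \<le> n \<Longrightarrow> Mon n' d \<subseteq> Mon n d"
  unfolding Mon_def by auto

lemma Mon_Suc_lookup_zero: assumes "a \<in> Mon (Suc n') d" "lookup a (Suc n') = 0" shows "a \<in> Mon n' d"
proof -
  have "a \<in> Mons n'" using Mons_Suc_lookup_zero[of a n'] assms Mon_Mons by blast
  then show ?thesis using assms(1) by (simp add: Mon_def Mons_def)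
qed

lemma lookup_strip: "lookup (a - single n (lookup a n)) i = (if i = n then 0 else lookup a i)"
  by (simp add: lookup_minus lookup_single when_def)

lemma strip_decomp: "a = (a - single n (lookup a n)) + single n (lookup a n)"
  by (rule poly_mapping_eqI) (simp add: lookup_add lookup_strip lookup_single when_def)

lemma mdeg_strip: "mdeg a = mdeg (a - single n (lookup a n)) + lookup a n"
  by (subst strip_decomp[of a n]) (simp add: mdeg_add)

text \<open>Deleting the \<open>x_n\<close>-part maps the monomials of degree \<open>d\<close> outside \<open>VR\<close> injectively into the
  monomials of degree \<open>\<le> d\<close> of \<open>R'\<close> outside \<open>V\<close>.\<close>

lemma card_standard_multiples_Suc:
  assumes n_Suc: "n = Suc n'" and V: "V \<subseteq> Mons n'"
  shows "card (Mon n d - multiples n V) \<le> (\<Sum>i\<le>d. card (Mon n' i - V))"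
proof -
  define f where "f a = a - single n (lookup a n)" for a :: "nat \<Rightarrow>\<^sub>0 nat"
  have inj: "inj_on f (Mon n d)"
  proof (rule inj_onI)
    fix a b assume a: "a \<in> Mon n d" and b: "b \<in> Mon n d" and e: "f a = f b"
    have "lookup a n = lookup b n" using mdeg_strip[of a n] mdeg_strip[of b n] a b e by (simp add: Mon_def f_def)
    then show "a = b" using strip_decomp[of a n] strip_decomp[of b n] e by (simp add: f_def)
  qed
  have img: "f ` (Mon n d - multiples n V) \<subseteq> (\<Union>i\<in>{..d}. Mon n' i - V)"
  proof
    fix x assume "x \<in> f ` (Mon n d - multiples n V)"
    then obtain a where a: "a \<in> Mon n d" "a \<notin> multiples n V" "x = f a" by auto
    have keys: "keys x \<subseteq> {1..n'}"
    proof
      fix i assume i: "i \<in> keys x"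
      then have "i \<noteq> n" "i \<in> keys a" using a(3) by (auto simp: f_def in_keys_iff lookup_strip split: if_splits)
      then show "i \<in> {1..n'}" using a(1) n_Suc by (auto simp: Mon_def)
    qed
    have md: "mdeg x \<le> d" using mdeg_strip[of a n] a by (simp add: Mon_def f_def)
    have "x \<notin> V"
    proof
      assume "x \<in> V"
      moreover have "mdvd x a" using a(3) by (simp add: f_def mdvd_def lookup_strip)
      moreover have "a \<in> Mons n" using a(1) Mon_Mons by blast
      ultimately have "a \<in> multiples n V" by (auto simp: multiples_def)
      then show False using a(2) by simp
    qed
    then show "x \<in> (\<Union>i\<in>{..d}. Mon n' i - V)" using keys md by (auto simp: Mon_def)
  qed
  have "card (Mon n d - multiples n V) = card (f ` (Mon n d - multiples n V))"
    using inj by (intro card_image[symmetric]) (auto intro: inj_on_subset)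
  also have "\<dots> \<le> card (\<Union>i\<in>{..d}. Mon n' i - V)"
    by (intro card_mono img) (auto simp: finite_Mon)
  also have "\<dots> \<le> (\<Sum>i\<le>d. card (Mon n' i - V))"
    by (rule card_UN_le) simp
  finally show ?thesis .
qed

lemma monom_times_single: "monom e * single b c = (single (e + b) c :: 'k::comm_ring_1 mpoly)"
  by (simp add: monom_def mult_single)

lemma lookup_monom_times: "lookup (monom e * f :: 'k::comm_ring_1 mpoly) (e + a) = lookup f a"
proof -
  have "monom e * f = monom e * (\<Sum>b\<in>keys f. single b (lookup f b))" by (subst poly_eq_sum_single[of f]) (rule refl)
  also have "\<dots> = (\<Sum>b\<in>keys f. single (e + b) (lookup f b))" by (simp add: sum_distrib_left monom_times_single)
  finally have "lookup (monom e * f) (e + a) = (\<Sum>b\<in>keys f. lookup (single (e + b) (lookup f b)) (e + a))"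
    by (simp add: lookup_sum)
  also have "\<dots> = (\<Sum>b\<in>keys f. if b = a then lookup f b else 0)"
    by (intro sum.cong) (auto simp: lookup_single when_def)
  also have "\<dots> = lookup f a" by (simp add: sum.delta in_keys_iff)
  finally show ?thesis .
qed

lemma single_add_diff: "0 < lookup a n \<Longrightarrow> single n 1 + (a - single n 1) = (a :: nat \<Rightarrow>\<^sub>0 nat)"
  by (rule poly_mapping_eqI) (auto simp: lookup_add lookup_minus lookup_single when_def)

lemma hom_Suc_split_last_var:
  assumes g: "g \<in> (hom n (Suc d) :: 'k::comm_ring_1 mpoly set)"
  shows "\<exists>q\<in>hom n d. \<forall>a\<in>keys (g - var n * q). a \<in> keys g \<and> lookup a n = 0"
proof -
  let ?e = "single n (1::nat)"
  define P where "P = {a\<in>keys g. 0 < lookup a n}"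
  define Z where "Z = {a\<in>keys g. lookup a n = 0}"
  define q where "q = (\<Sum>a\<in>P. single (a - ?e) (lookup g a))"
  have fP: "finite P" "finite Z" by (simp_all add: P_def Z_def)
  have "monom ?e * q = (\<Sum>a\<in>P. single (?e + (a - ?e)) (lookup g a))"
    by (simp add: q_def sum_distrib_left monom_times_single)
  also have "\<dots> = (\<Sum>a\<in>P. single a (lookup g a))"
    by (intro sum.cong refl) (metis (mono_tags, lifting) P_def single_add_diff mem_Collect_eq)
  finally have Xq: "monom ?e * q = (\<Sum>a\<in>P. single a (lookup g a))" .
  have "keys g = Z \<union> P" "Z \<inter> P = {}" by (auto simp: P_def Z_def)
  then have "g = (\<Sum>a\<in>Z. single a (lookup g a)) + (\<Sum>a\<in>P. single a (lookup g a))"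
    using poly_eq_sum_single[of g] fP by (metis sum.union_disjoint)
  then have gX: "g - monom ?e * q = (\<Sum>a\<in>Z. single a (lookup g a))" using Xq by (metis add_diff_cancel_right')
  have k1: "keys (g - monom ?e * q) \<subseteq> Z"
  proof
    fix a assume "a \<in> keys (g - monom ?e * q)"
    then have "a \<in> (\<Union>b\<in>Z. keys (single b (lookup g b)))" using gX keys_sum by fastforce
    then show "a \<in> Z" by (auto split: if_splits)
  qed
  have qh: "q \<in> hom n d"
  proof -
    have "keys q \<subseteq> Mon n d"
    proof
      fix b assume "b \<in> keys q"
      then have "b \<in> (\<Union>a\<in>P. keys (single (a - ?e) (lookup g a)))" using keys_sum unfolding q_def by fastforce
      then obtain a where a: "a \<in> P" "b = a - ?e" by (auto split: if_splits)
      have aM: "a \<in> Mon n (Suc d)" using a(1) g by (auto simp: P_def hom_def)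
      have "keys b \<subseteq> keys a" using a(2) keys_diff_subset by blast
      moreover have "mdeg a = mdeg ?e + mdeg b"
        using single_add_diff[of a n] a by (metis P_def mdeg_add mem_Collect_eq)
      ultimately show "b \<in> Mon n d" using aM by (auto simp: Mon_def)
    qed
    then show ?thesis by (simp add: hom_def)
  qed
  show ?thesis using qh k1 by (auto simp: Z_def)
qed

lemma mdvd_remove_var:
  assumes "lookup s n = 0" "mdvd s (a + single n 1)" shows "mdvd s a"
  unfolding mdvd_def
proof
  fix i
  show "lookup s i \<le> lookup a i"
  proof (cases "i = n")
    case True then show ?thesis using assms(1) by simp
  next
    case False then show ?thesis using assms(2) by (simp add: mdvd_def lookup_add lookup_single when_def) (metis add_0_right)
  qed
qed

lemma monom_mem_ideal_if_last_var:
  assumes K: "is_ideal n (K :: 'k::comm_ring_1 mpoly set)" "var n \<in> K"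
    and a: "a \<in> Mons n" "0 < lookup a n"
  shows "monom a \<in> K"
proof -
  have "(monom a :: 'k mpoly) = monom (a - single n 1) * var n"
    using single_add_diff[OF a(2)] by (metis add.commute monom_mult)
  moreover have "(monom (a - single n 1) :: 'k mpoly) \<in> polyring n"
    using Mons_diff[OF a(1)] by (auto simp: polyring_def Mons_def)
  ultimately show ?thesis using K by (simp add: is_ideal_def)
qed

section \<open>Setting the last variable to zero\<close>

definition subst0 :: "nat \<Rightarrow> 'k::comm_ring_1 mpoly \<Rightarrow> 'k mpoly" where
  "subst0 n f = (\<Sum>a\<in>{a\<in>keys f. lookup a n = 0}. single a (lookup f a))"

lemma lookup_subst0: "lookup (subst0 n f) a = (if lookup a n = 0 then lookup f a else 0)"
proof -
  have "lookup (subst0 n f) a = (\<Sum>b\<in>{b\<in>keys f. lookup b n = 0}. if b = a then lookup f b else 0)"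
    unfolding subst0_def lookup_sum by (intro sum.cong) (auto simp: lookup_single when_def)
  also have "\<dots> = (if a \<in> {b\<in>keys f. lookup b n = 0} then lookup f a else 0)"
    by (simp add: sum.delta)
  also have "\<dots> = (if lookup a n = 0 then lookup f a else 0)" by (auto simp: in_keys_iff)
  finally show ?thesis .
qed

lemma subst0_add: "subst0 n (f + g) = subst0 n f + subst0 n g"
  by (rule poly_mapping_eqI) (simp add: lookup_subst0 lookup_add)

lemma subst0_diff: "subst0 n (f - g) = subst0 n f - subst0 n g"
  by (rule poly_mapping_eqI) (simp add: lookup_subst0 lookup_minus)

lemma subst0_zero: "subst0 n 0 = 0"
  by (rule poly_mapping_eqI) (simp add: lookup_subst0)

lemma subst0_id: assumes "\<And>a. a \<in> keys f \<Longrightarrow> lookup a n = 0" shows "subst0 n f = f"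
proof (rule poly_mapping_eqI)
  fix k show "lookup (subst0 n f) k = lookup f k"
  proof (cases "k \<in> keys f")
    case True then show ?thesis using assms by (simp add: lookup_subst0)
  next
    case False then show ?thesis by (simp add: lookup_subst0 in_keys_iff)
  qed
qed

lemma subst0_vanish: assumes "\<And>a. a \<in> keys f \<Longrightarrow> 0 < lookup a n" shows "subst0 n f = 0"
proof (rule poly_mapping_eqI)
  fix k show "lookup (subst0 n f) k = lookup 0 k"
  proof (cases "k \<in> keys f")
    case True then show ?thesis using assms[OF True] by (simp add: lookup_subst0)
  next
    case False then show ?thesis by (simp add: lookup_subst0 in_keys_iff)
  qed
qed

lemma keys_subst0: "a \<in> keys (subst0 n f) \<Longrightarrow> a \<in> keys f \<and> lookup a n = 0"
  by (auto simp: lookup_subst0 in_keys_iff split: if_splits)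

lemma keys_diff_subst0: "a \<in> keys (f - subst0 n f) \<Longrightarrow> a \<in> keys f \<and> 0 < lookup a n"
  by (auto simp: lookup_subst0 in_keys_iff lookup_minus split: if_splits)

lemma keys_mult_pos_right:
  assumes "\<And>b. b \<in> keys y \<Longrightarrow> 0 < lookup b n" "c \<in> keys (x * y :: 'k::comm_ring_1 mpoly)"
  shows "0 < lookup c n"
proof -
  obtain a b where "c = a + b" "a \<in> keys x" "b \<in> keys y" using keys_mult assms(2) by blast
  then show ?thesis using assms(1) by (simp add: lookup_add)
qed

lemma keys_mult_pos_left:
  assumes "\<And>b. b \<in> keys x \<Longrightarrow> 0 < lookup b n" "c \<in> keys (x * y :: 'k::comm_ring_1 mpoly)"
  shows "0 < lookup c n"
proof -
  obtain a b where "c = a + b" "a \<in> keys x" "b \<in> keys y" using keys_mult assms(2) by blast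
  then show ?thesis using assms(1) by (simp add: lookup_add)
qed

lemma subst0_mult: "subst0 n (r * f) = subst0 n r * (subst0 n f :: 'k::comm_ring_1 mpoly)"
proof -
  define r1 where "r1 = r - subst0 n r"
  define f1 where "f1 = f - subst0 n f"
  have r1: "\<And>a. a \<in> keys r1 \<Longrightarrow> 0 < lookup a n" using keys_diff_subst0 unfolding r1_def by blast
  have f1: "\<And>a. a \<in> keys f1 \<Longrightarrow> 0 < lookup a n" using keys_diff_subst0 unfolding f1_def by blast
  have "r * f = subst0 n r * subst0 n f + (subst0 n r * f1 + r1 * f)"
    unfolding r1_def f1_def by (simp add: algebra_simps)
  then have "subst0 n (r * f) = subst0 n (subst0 n r * subst0 n f) + (subst0 n (subst0 n r * f1) + subst0 n (r1 * f))"
    by (simp add: subst0_add)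
  also have "subst0 n (subst0 n r * f1) = 0"
    by (rule subst0_vanish) (rule keys_mult_pos_right[OF f1])
  also have "subst0 n (r1 * f) = 0"
    by (rule subst0_vanish) (rule keys_mult_pos_left[OF r1])
  also have "subst0 n (subst0 n r * subst0 n f) = subst0 n r * subst0 n f"
  proof (rule subst0_id)
    fix c assume "c \<in> keys (subst0 n r * subst0 n f)"
    then obtain a b where ab: "c = a + b" "a \<in> keys (subst0 n r)" "b \<in> keys (subst0 n f)" using keys_mult by blast
    have "lookup a n = 0" using keys_subst0[OF ab(2)] by blast
    moreover have "lookup b n = 0" using keys_subst0[OF ab(3)] by blast
    ultimately show "lookup c n = 0" using ab(1) by (simp add: lookup_add)
  qed
  finally show ?thesis by simp
qed

lemma hom_polyring: "hom n d \<subseteq> polyring n"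
  by (auto simp: hom_def polyring_def Mon_def)

lemma polyring_mono: assumes "n' \<le> n" shows "polyring n' \<subseteq> polyring n"
proof -
  have "{1..n'} \<subseteq> {1..n}" using assms by auto
  then show ?thesis unfolding polyring_def by blast
qed

lemma hom_mono: "n' \<le> n \<Longrightarrow> hom n' d \<subseteq> hom n d"
  using Mon_mono by (fastforce simp: hom_def)

lemma lookup_polyring_Suc: "f \<in> polyring n' \<Longrightarrow> a \<in> keys f \<Longrightarrow> lookup a (Suc n') = 0"
  using lookup_Mons_above[of a n' "Suc n'"] by (auto simp: polyring_def Mons_def)

lemma subst0_polyring:
  assumes "f \<in> polyring (Suc n')" shows "subst0 (Suc n') f \<in> polyring n'"
proof -
  have "\<forall>a\<in>keys (subst0 (Suc n') f). keys a \<subseteq> {1..n'}"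
  proof
    fix a assume "a \<in> keys (subst0 (Suc n') f)"
    then have "a \<in> keys f" "lookup a (Suc n') = 0" using keys_subst0 by blast+
    then have "a \<in> Mons (Suc n')" using assms by (auto simp: polyring_def Mons_def)
    then have "a \<in> Mons n'" using Mons_Suc_lookup_zero \<open>lookup a (Suc n') = 0\<close> by blast
    then show "keys a \<subseteq> {1..n'}" by (simp add: Mons_def)
  qed
  then show ?thesis by (simp add: polyring_def)
qed

lemma subst0_hom:
  assumes "f \<in> hom (Suc n') d" shows "subst0 (Suc n') f \<in> hom n' d"
proof -
  have "keys (subst0 (Suc n') f) \<subseteq> Mon n' d"
  proof
    fix a assume "a \<in> keys (subst0 (Suc n') f)"
    then have "a \<in> keys f" "lookup a (Suc n') = 0" using keys_subst0 by blast+
    then show "a \<in> Mon n' d" using assms Mon_Suc_lookup_zero by (auto simp: hom_def)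
  qed
  then show ?thesis by (simp add: hom_def)
qed

lemma diff_subst0_mem_ideal:
  assumes K: "is_ideal n (K :: 'k::comm_ring_1 mpoly set)" "var n \<in> K" and f: "f \<in> polyring n"
  shows "f - subst0 n f \<in> K"
proof (rule ideal_memI_monoms[OF K(1)])
  fix a assume "a \<in> keys (f - subst0 n f)"
  then have "a \<in> keys f" "0 < lookup a n" using keys_diff_subst0 by blast+
  then show "monom a \<in> K"
    using monom_mem_ideal_if_last_var[OF K] f by (auto simp: polyring_def Mons_def)
qed

lemma is_ideal_subst0_preimage:
  assumes J: "is_ideal n' (J :: 'k::comm_ring_1 mpoly set)"
  shows "is_ideal (Suc n') {f \<in> polyring (Suc n'). subst0 (Suc n') f \<in> J}"
  unfolding is_ideal_def
proof (intro conjI ballI)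
  show "0 \<in> {f \<in> polyring (Suc n'). subst0 (Suc n') f \<in> J}"
    using J by (simp add: subst0_zero polyring_def is_ideal_def)
next
  fix f g :: "'k mpoly" assume "f \<in> {f \<in> polyring (Suc n'). subst0 (Suc n') f \<in> J}"
    "g \<in> {f \<in> polyring (Suc n'). subst0 (Suc n') f \<in> J}"
  then show "f + g \<in> {f \<in> polyring (Suc n'). subst0 (Suc n') f \<in> J}"
    using J polyring_add by (auto simp: subst0_add is_ideal_def)
next
  fix r f :: "'k mpoly" assume r: "r \<in> polyring (Suc n')"
    and f: "f \<in> {f \<in> polyring (Suc n'). subst0 (Suc n') f \<in> J}"
  have "subst0 (Suc n') r * subst0 (Suc n') f \<in> J"
    using subst0_polyring[OF r] f J by (auto simp: is_ideal_def)
  then show "r * f \<in> {f \<in> polyring (Suc n'). subst0 (Suc n') f \<in> J}"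
    using r f polyring_mult by (auto simp: subst0_mult)
qed auto

lemma is_ideal_Int_polyring:
  assumes I: "is_ideal n (I :: 'k::comm_ring_1 mpoly set)" and n': "n' \<le> n"
  shows "is_ideal n' (I \<inter> polyring n')"
  unfolding is_ideal_def
proof (intro conjI ballI)
  show "0 \<in> I \<inter> polyring n'" using I by (simp add: is_ideal_def polyring_def)
  fix f g :: "'k mpoly" assume "f \<in> I \<inter> polyring n'" "g \<in> I \<inter> polyring n'"
  then show "f + g \<in> I \<inter> polyring n'" using I polyring_add by (auto simp: is_ideal_def)
next
  fix r f :: "'k mpoly" assume r: "r \<in> polyring n'" and f: "f \<in> I \<inter> polyring n'"
  have "r \<in> polyring n" using r polyring_mono[OF n'] by blast
  then show "r * f \<in> I \<inter> polyring n'" using I f r polyring_mult by (auto simp: is_ideal_def)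
qed auto

text \<open>\<open>R/(BR + (x_n)) \<cong> R'/BR'\<close>, the isomorphism being induced by \<open>x_n \<mapsto> 0\<close>.\<close>

lemma mem_ideal_gen_last_var_iff:
  assumes B: "B \<subseteq> (polyring n' :: 'k::comm_ring_1 mpoly set)" and f: "f \<in> polyring (Suc n')"
  shows "f \<in> ideal_gen (Suc n') (B \<union> {var (Suc n')}) \<longleftrightarrow> subst0 (Suc n') f \<in> ideal_gen n' B"
proof -
  let ?K = "ideal_gen (Suc n') (B \<union> {var (Suc n')})" and ?J = "ideal_gen n' B"
  have B': "B \<subseteq> polyring (Suc n')" using B polyring_mono[of n' "Suc n'"] by auto
  have X: "var (Suc n') \<in> (polyring (Suc n') :: 'k mpoly set)" by (simp add: polyring_def)
  have K: "is_ideal (Suc n') ?K" using B' X by (intro ideal_gen_is_ideal) auto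
  have subst0_B: "subst0 (Suc n') b = b" if "b \<in> B" for b
    using lookup_polyring_Suc that B by (intro subst0_id) blast
  have "subst0 (Suc n') (var (Suc n') :: 'k mpoly) = 0" by (rule subst0_vanish) simp
  then have K_J: "?K \<subseteq> {f \<in> polyring (Suc n'). subst0 (Suc n') f \<in> ?J}"
    using B' X subst0_B ideal_gen_superset[of B n'] zero_mem_ideal_gen[of n' B]
    by (intro ideal_gen_least is_ideal_subst0_preimage ideal_gen_is_ideal[OF B]) auto
  have J_K: "?J \<subseteq> ?K"
    using is_ideal_Int_polyring[OF K, of n'] B ideal_gen_superset[of "B \<union> {var (Suc n')}"]
    by (intro subset_trans[OF ideal_gen_least[of n' "?K \<inter> polyring n'"]]) auto
  show ?thesis
  proof
    assume "f \<in> ?K"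
    then show "subst0 (Suc n') f \<in> ?J" using K_J by blast
  next
    assume "subst0 (Suc n') f \<in> ?J"
    then have "subst0 (Suc n') f \<in> ?K" using J_K by blast
    moreover have "f - subst0 (Suc n') f \<in> ?K"
      using diff_subst0_mem_ideal[OF K _ f] ideal_gen_superset by blast
    ultimately have "subst0 (Suc n') f + (f - subst0 (Suc n') f) \<in> ?K"
      using K unfolding is_ideal_def by blast
    then show "f \<in> ?K" by simp
  qed
qed

lemma maxrank_add_last_var:
  assumes B: "B \<subseteq> (polyring n' :: 'k::field mpoly set)" and L: "L \<in> hom n' 1"
    and mr: "maxrank n' (ideal_gen n' B) L d"
  shows "maxrank (Suc n') (ideal_gen (Suc n') (B \<union> {var (Suc n')})) L d"
proof -
  let ?n = "Suc n'" let ?K = "ideal_gen ?n (B \<union> {var ?n})" and ?J = "ideal_gen n' B"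
  note K_iff = mem_ideal_gen_last_var_iff[OF B]
  have Lp: "L \<in> polyring n'" using L hom_polyring by blast
  have Lp': "L \<in> polyring ?n" using Lp polyring_mono[of n' ?n] by auto
  have subst0_free: "subst0 ?n f = f" if "f \<in> polyring n'" for f :: "'k mpoly"
    using lookup_polyring_Suc[OF that] by (intro subst0_id) simp
  from mr show ?thesis
    unfolding maxrank_def
  proof
    assume inj: "\<forall>f\<in>hom n' d. L * f \<in> ?J \<longrightarrow> f \<in> ?J"
    have "f \<in> ?K" if f: "f \<in> hom ?n d" "L * f \<in> ?K" for f
    proof -
      have fp: "f \<in> polyring ?n" using f(1) hom_polyring by blast
      have "L * subst0 ?n f \<in> ?J"
        using f(2) K_iff[OF polyring_mult[OF Lp' fp]] by (simp add: subst0_mult subst0_free[OF Lp])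
      then show ?thesis using inj subst0_hom[OF f(1)] K_iff[OF fp] by blast
    qed
    then show "(\<forall>f\<in>hom ?n d. L * f \<in> ?K \<longrightarrow> f \<in> ?K) \<or>
      (\<forall>g\<in>hom ?n (Suc d). \<exists>f\<in>hom ?n d. g - L * f \<in> ?K)" by blast
  next
    assume sur: "\<forall>g\<in>hom n' (Suc d). \<exists>f\<in>hom n' d. g - L * f \<in> ?J"
    have "\<exists>f\<in>hom ?n d. g - L * f \<in> ?K" if g: "g \<in> hom ?n (Suc d)" for g
    proof -
      obtain q where q: "q \<in> hom n' d" "subst0 ?n g - L * q \<in> ?J"
        using sur subst0_hom[OF g] by blast
      have Lq: "L * q \<in> polyring n'" using polyring_mult[OF Lp] q(1) hom_polyring by blast
      have "g \<in> polyring ?n" using g hom_polyring by blast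
      moreover have "L * q \<in> polyring ?n" using Lq polyring_mono[of n' ?n] by auto
      ultimately have "g - L * q \<in> ?K"
        using K_iff[OF polyring_diff] q(2) by (simp add: subst0_diff subst0_free[OF Lq])
      moreover have "q \<in> hom ?n d" using q(1) hom_mono[of n' ?n d] by auto
      ultimately show ?thesis by blast
    qed
    then show "(\<forall>f\<in>hom ?n d. L * f \<in> ?K \<longrightarrow> f \<in> ?K) \<or>
      (\<forall>g\<in>hom ?n (Suc d). \<exists>f\<in>hom ?n d. g - L * f \<in> ?K)" by blast
  qed
qed

lemma WLE_add_last_var:
  assumes "B \<subseteq> (polyring n' :: 'k::field mpoly set)" and L: "WLE n' (ideal_gen n' B) L"
  shows "WLE (Suc n') (ideal_gen (Suc n') (B \<union> {var (Suc n')})) L"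
  unfolding WLE_def
proof (intro conjI allI impI)
  show "L \<in> hom (Suc n') 1" using L hom_mono[of n' "Suc n'" 1] by (auto simp: WLE_def)
  fix d :: nat assume "1 \<le> d"
  then show "maxrank (Suc n') (ideal_gen (Suc n') (B \<union> {var (Suc n')})) L d"
    using L by (intro maxrank_add_last_var[OF assms(1)]) (auto simp: WLE_def)
qed

lemma mem_mon_ideal_if_times_monom:
  assumes closed: "\<forall>a\<in>Mon n d. a + e \<in> U \<longrightarrow> a \<in> U"
    and f: "f \<in> hom n d" "monom e * f \<in> mon_ideal U"
  shows "f \<in> (mon_ideal U :: 'k::comm_ring_1 mpoly set)"
proof -
  have "a \<in> U" if a: "a \<in> keys f" for a
  proof -
    have "lookup (monom e * f) (e + a) = lookup f a" by (rule lookup_monom_times)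
    then have "e + a \<in> keys (monom e * f)" using a by (simp add: in_keys_iff)
    then have "a + e \<in> U" using f(2) by (auto simp: mon_ideal_def add.commute)
    moreover have "a \<in> Mon n d" using a f(1) by (auto simp: hom_def)
    ultimately show "a \<in> U" using closed by blast
  qed
  then show ?thesis by (auto simp: mon_ideal_def)
qed

lemma ex_diff_times_var_mem_mon_ideal:
  assumes free: "\<forall>c\<in>Mon n (Suc d). lookup c n = 0 \<longrightarrow> c \<in> U" and g: "g \<in> hom n (Suc d)"
  shows "\<exists>f\<in>hom n d. g - var n * f \<in> (mon_ideal U :: 'k::comm_ring_1 mpoly set)"
proof -
  obtain q where q: "q \<in> hom n d" "\<forall>a\<in>keys (g - var n * q). a \<in> keys g \<and> lookup a n = 0"
    using hom_Suc_split_last_var[OF g] by blast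
  have "keys (g - var n * q) \<subseteq> U"
    using q(2) free g by (fastforce simp: hom_def)
  then show ?thesis using q(1) by (auto simp: mon_ideal_def)
qed

lemma upclosed_free_degree_mono:
  assumes U: "upclosed n U" and i: "\<forall>b\<in>Mon n i. lookup b n = 0 \<longrightarrow> b \<in> U"
    and c: "c \<in> Mon n j" "lookup c n = 0" "i \<le> j"
  shows "c \<in> U"
proof -
  obtain b where b: "mdvd b c" "mdeg b = i" using ex_mdvd_mdeg c by (auto simp: Mon_def)
  have "keys b \<subseteq> keys c"
    using b(1) by (auto simp: mdvd_def in_keys_iff) (meson less_le_trans)
  then have "b \<in> Mon n i" using c(1) b(2) by (auto simp: Mon_def)
  moreover have "lookup b n = 0" using b(1) c(2) unfolding mdvd_def by (metis le_zero_eq)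
  ultimately have "b \<in> U" using i by blast
  moreover have "c - b \<in> Mons n" using Mons_diff Mon_Mons[OF c(1)] by blast
  ultimately have "b + (c - b) \<in> U" using upclosedD[OF U] by blast
  then show ?thesis using mdvd_add_diff[OF b(1)] by simp
qed

text \<open>In this context \<open>V\<close> stands for the monomial set of \<open>W_{m-1}(\<Delta>h)\<close> in \<open>n' = n - 1\<close>
  variables and \<open>g\<close> for \<open>\<Delta>h\<close>; \<open>W_m(h)\<close> is built from the multiples of \<open>V\<close> in \<open>n\<close> variables.\<close>

context
  fixes n n' :: nat and h g :: "nat list" and V :: "(nat \<Rightarrow>\<^sub>0 nat) set"
  assumes n_Suc: "n = Suc n'" and V: "upclosed n' V"
    and card_standard_V: "\<And>i. card (Mon n' i - V) \<le> hv g i"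
    and sum_g: "\<And>d. (\<Sum>i\<le>d. hv g i) \<le> hv h d \<or> hv g d = 0"
begin

lemma base_Mons: "V \<subseteq> Mons n"
  using upclosed_Mons[OF V] Mons_mono[of n' n] n_Suc by auto

text \<open>The hypothesis \<open>sum_g\<close> enters here: in degree \<open>d\<close>, either \<open>VR\<close> has at most \<open>h_d\<close> standard
  monomials, so nothing is added, or \<open>g_d = 0\<close> and every \<open>x_n\<close>-free monomial already lies in \<open>VR\<close>.\<close>

lemma wnew_last_var_pos:
  assumes t: "t \<in> wnew n h (multiples n V) d"
  shows "0 < lookup t n"
proof (rule ccontr)
  assume "\<not> 0 < lookup t n"
  then have t0: "lookup t n = 0" by simp
  let ?U = "wmons n h (multiples n V) d"
  have tM: "t \<in> Mon n d - ?U" using wnew_subset t by blast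
  have fin: "finite (wnew n h (multiples n V) d)" using wnew_subset finite_Mon by (metis finite_Diff finite_subset)
  have "0 < card (wnew n h (multiples n V) d)" using fin t card_gt_0_iff by blast
  then have gt: "hv h d < card (Mon n d - ?U)" by (simp add: card_wnew)
  from sum_g[of d] show False
  proof
    assume s: "(\<Sum>i\<le>d. hv g i) \<le> hv h d"
    have "multiples n V \<subseteq> ?U" using wmons_mono[of 0 d n h "multiples n V"] by simp
    then have "card (Mon n d - ?U) \<le> card (Mon n d - multiples n V)"
      by (intro card_mono) (auto simp: finite_Mon)
    also have "\<dots> \<le> (\<Sum>i\<le>d. card (Mon n' i - V))" by (rule card_standard_multiples_Suc[OF n_Suc upclosed_Mons[OF V]])
    also have "\<dots> \<le> (\<Sum>i\<le>d. hv g i)" by (intro sum_mono card_standard_V)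
    finally show False using s gt by simp
  next
    assume "hv g d = 0"
    then have "card (Mon n' d - V) = 0" using card_standard_V[of d] by simp
    then have "Mon n' d - V = {}" by (simp add: finite_Mon)
    moreover have "t \<in> Mon n' d" using Mon_Suc_lookup_zero[of t n' d] tM t0 n_Suc by simp
    ultimately have "t \<in> V" by blast
    then have "t \<in> multiples n V" using subset_multiples[OF base_Mons] by blast
    then have "t \<in> ?U" using wmons_mono[of 0 d n h "multiples n V"] by auto
    then show False using tM by blast
  qed
qed

lemma wmons_last_var_zero:
  assumes "a \<in> wmons n h (multiples n V) d" "lookup a n = 0" shows "a \<in> V"
  using assms(1)
proof (induction d)
  case 0
  then obtain s where s: "s \<in> V" "mdvd s a" "a \<in> Mons n" by (auto simp: multiples_def)
  have aM: "a \<in> Mons n'" using Mons_Suc_lookup_zero[of a n'] s(3) assms(2) n_Suc by simp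
  have "s + (a - s) \<in> V" using upclosedD[OF V s(1) Mons_diff[OF aM]] .
  then show ?case using mdvd_add_diff[OF s(2)] by simp
next
  case (Suc d)
  show ?case
  proof (cases "a \<in> wmons n h (multiples n V) d")
    case True then show ?thesis by (rule Suc.IH)
  next
    case False
    then have "a \<in> multiples n (wnew n h (multiples n V) d)" using Suc.prems by (simp add: wmons_Suc)
    then obtain t where t: "t \<in> wnew n h (multiples n V) d" "mdvd t a" by (auto simp: multiples_def)
    have "lookup t n \<le> lookup a n" using t(2) by (simp add: mdvd_def)
    then show ?thesis using wnew_last_var_pos[OF t(1)] assms(2) by simp
  qed
qed

lemma mon_ideal_lim_subset:
  "mon_ideal (wmons_lim n h (multiples n V)) \<subseteq> ideal_gen n (mon_ideal V \<union> {var n} :: 'k::comm_ring_1 mpoly set)"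
proof
  let ?K = "ideal_gen n (mon_ideal V \<union> {var n} :: 'k mpoly set)"
  have "mon_ideal V \<union> {var n} \<subseteq> (polyring n :: 'k mpoly set)"
    using mon_ideal_polyring[OF base_Mons] n_Suc by (auto simp: polyring_def)
  then have K: "is_ideal n ?K" by (rule ideal_gen_is_ideal)
  have lim: "wmons_lim n h (multiples n V) \<subseteq> Mons n"
    using upclosed_Mons[OF upclosed_wmons_lim[OF upclosed_multiples]] .
  fix f :: "'k mpoly" assume f: "f \<in> mon_ideal (wmons_lim n h (multiples n V))"
  show "f \<in> ?K"
  proof (rule ideal_memI_monoms[OF K])
    fix a assume "a \<in> keys f"
    then have a: "a \<in> wmons_lim n h (multiples n V)" using f by (auto simp: mon_ideal_def)
    show "monom a \<in> ?K"
    proof (cases "lookup a n = 0")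
      case True
      then have "a \<in> V" using a wmons_last_var_zero by (auto simp: wmons_lim_def)
      then have "(monom a :: 'k mpoly) \<in> mon_ideal V" by (simp add: monom_mem_mon_ideal)
      then show ?thesis using ideal_gen_superset by blast
    next
      case False
      have "(var n :: 'k mpoly) \<in> ?K" by (rule subsetD[OF ideal_gen_superset]) simp
      then show ?thesis
        by (rule monom_mem_ideal_if_last_var[OF K]) (use a lim False in auto)
    qed
  qed
qed

lemma mon_ideal_base_subset_lim: "mon_ideal V \<subseteq> mon_ideal (wmons_lim n h (multiples n V))"
proof -
  have "V \<subseteq> wmons_lim n h (multiples n V)"
    using subset_multiples[OF base_Mons] wmons_subset_lim[of n h "multiples n V" 0] by auto
  then show ?thesis by (auto simp: mon_ideal_def)
qed

lemma wmons_fill_free_degree: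
  assumes "a + single n 1 \<in> wmons n h (multiples n V) D" "a \<notin> wmons n h (multiples n V) D" "a \<in> Mons n"
  shows "\<exists>i\<le>Suc (mdeg a). \<forall>b\<in>Mon n i. lookup b n = 0 \<longrightarrow> b \<in> wmons n h (multiples n V) (Suc i)"
  using assms(1,2)
proof (induction D)
  case 0
  then obtain s where s: "s \<in> V" "mdvd s (a + single n 1)" by (auto simp: multiples_def)
  have "lookup s n = 0" using lookup_Mons_above[of s n' n] upclosed_Mons[OF V] s(1) n_Suc by auto
  then have "mdvd s a" using mdvd_remove_var s(2) by blast
  then have "a \<in> multiples n V" using s(1) assms(3) by (auto simp: multiples_def)
  then show ?case using 0 by simp
next
  case (Suc D)
  let ?U = "wmons n h (multiples n V) D" and ?T = "wnew n h (multiples n V) D"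
  have na: "a \<notin> ?U" "a \<notin> multiples n ?T" using Suc.prems(2) by (auto simp: wmons_Suc)
  show ?case
  proof (cases "a + single n 1 \<in> ?U")
    case True then show ?thesis using Suc.IH na(1) by blast
  next
    case False
    then have "a + single n 1 \<in> multiples n ?T" using Suc.prems(1) by (simp add: wmons_Suc)
    then obtain t where t: "t \<in> ?T" "mdvd t (a + single n 1)" by (auto simp: multiples_def)
    have tpos: "lookup t n \<noteq> 0"
    proof
      assume "lookup t n = 0"
      then have "mdvd t a" using mdvd_remove_var t(2) by blast
      then have "a \<in> multiples n ?T" using t(1) assms(3) by (auto simp: multiples_def)
      then show False using na(2) by simp
    qed
    have tM: "t \<in> Mon n D - ?U" using wnew_subset t(1) by blast
    have "D = mdeg t" using tM by (simp add: Mon_def)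
    also have "\<dots> \<le> mdeg (a + single n 1)" by (rule mdeg_mono[OF t(2)])
    also have "\<dots> = Suc (mdeg a)" by (simp add: mdeg_add)
    finally have Dle: "D \<le> Suc (mdeg a)" .
    have "\<forall>b\<in>Mon n D. lookup b n = 0 \<longrightarrow> b \<in> wmons n h (multiples n V) (Suc D)"
      using free_mem_wmons_Suc[OF t(1)] tpos by blast
    then show ?thesis using Dle by blast
  qed
qed

lemma free_monomials_in_wmons_lim:
  assumes a: "a \<in> Mon n d" "a + single n 1 \<in> wmons_lim n h (multiples n V)"
    "a \<notin> wmons_lim n h (multiples n V)"
  shows "\<forall>c\<in>Mon n (Suc d). lookup c n = 0 \<longrightarrow> c \<in> wmons_lim n h (multiples n V)"
proof -
  obtain D where D: "a + single n 1 \<in> wmons n h (multiples n V) D"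
    using a(2) by (auto simp: wmons_lim_def)
  have "a \<notin> wmons n h (multiples n V) D" using a(3) wmons_subset_lim by blast
  from wmons_fill_free_degree[OF D this Mon_Mons[OF a(1)]] obtain i where
    i: "i \<le> Suc (mdeg a)" "\<forall>b\<in>Mon n i. lookup b n = 0 \<longrightarrow> b \<in> wmons n h (multiples n V) (Suc i)"
    by blast
  have i_le: "i \<le> Suc d" using i(1) a(1) by (simp add: Mon_def)
  have lim: "\<forall>b\<in>Mon n i. lookup b n = 0 \<longrightarrow> b \<in> wmons_lim n h (multiples n V)"
    using i(2) wmons_subset_lim[of n h "multiples n V" "Suc i"] by blast
  show ?thesis
  proof (intro ballI impI)
    fix c assume "c \<in> Mon n (Suc d)" "lookup c n = 0"
    then show "c \<in> wmons_lim n h (multiples n V)"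
      by (rule upclosed_free_degree_mono[OF upclosed_wmons_lim[OF upclosed_multiples] lim _ _ i_le])
  qed
qed

lemma WLE_last_var:
  "WLE n (mon_ideal (wmons_lim n h (multiples n V)) :: 'k::field mpoly set) (var n)"
  unfolding WLE_def maxrank_def
proof (intro conjI allI impI)
  let ?U = "wmons_lim n h (multiples n V)"
  show "(var n :: 'k mpoly) \<in> hom n 1" using n_Suc by (simp add: hom_def Mon_def)
  fix d :: nat
  show "(\<forall>f\<in>hom n d. var n * f \<in> mon_ideal ?U \<longrightarrow> f \<in> (mon_ideal ?U :: 'k mpoly set)) \<or>
    (\<forall>g\<in>hom n (Suc d). \<exists>f\<in>hom n d. g - var n * f \<in> (mon_ideal ?U :: 'k mpoly set))"
  proof (cases "\<forall>a\<in>Mon n d. a + single n 1 \<in> ?U \<longrightarrow> a \<in> ?U")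
    case True
    have "\<forall>f\<in>hom n d. var n * f \<in> mon_ideal ?U \<longrightarrow> f \<in> (mon_ideal ?U :: 'k mpoly set)"
      using mem_mon_ideal_if_times_monom[OF True] by blast
    then show ?thesis ..
  next
    case False
    then obtain a where "a \<in> Mon n d" "a + single n 1 \<in> ?U" "a \<notin> ?U" by blast
    then have "\<forall>c\<in>Mon n (Suc d). lookup c n = 0 \<longrightarrow> c \<in> ?U"
      by (rule free_monomials_in_wmons_lim)
    then have "\<forall>g\<in>hom n (Suc d). \<exists>f\<in>hom n d. g - var n * f \<in> (mon_ideal ?U :: 'k mpoly set)"
      using ex_diff_times_var_mem_mon_ideal by blast
    then show ?thesis ..
  qed
qed

lemma ideal_gen_wmons_lim_last_var:
  assumes A: "A \<subseteq> (polyring n' :: 'k::comm_ring_1 mpoly set)"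
  shows "ideal_gen n (mon_ideal (wmons_lim n h (multiples n V)) \<union> insert (var n) A)
    = ideal_gen n ((mon_ideal V \<union> A) \<union> {var n})"
proof (rule ideal_gen_eqI)
  let ?U = "wmons_lim n h (multiples n V)" and ?B = "(mon_ideal V \<union> A) \<union> {var n}"
  have X: "(var n :: 'k mpoly) \<in> polyring n" using n_Suc by (simp add: polyring_def)
  have A': "A \<subseteq> polyring n" using A polyring_mono[of n' n] n_Suc by auto
  have V': "(mon_ideal V :: 'k mpoly set) \<subseteq> polyring n" by (rule mon_ideal_polyring[OF base_Mons])
  show "mon_ideal ?U \<union> insert (var n) A \<subseteq> polyring n"
    using mon_ideal_polyring[OF upclosed_Mons[OF upclosed_wmons_lim[OF upclosed_multiples]]] X A'
    by blast
  show B: "?B \<subseteq> polyring n" using V' A' X by blast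
  have "ideal_gen n (mon_ideal V \<union> {var n}) \<subseteq> ideal_gen n ?B"
    by (rule ideal_gen_mono[OF B]) blast
  with mon_ideal_lim_subset have "mon_ideal ?U \<subseteq> ideal_gen n ?B"
    by (rule subset_trans)
  then show "mon_ideal ?U \<union> insert (var n) A \<subseteq> ideal_gen n ?B"
    using ideal_gen_superset[of ?B n] by blast
  have "?B \<subseteq> mon_ideal ?U \<union> insert (var n) A"
    using mon_ideal_base_subset_lim by blast
  then show "?B \<subseteq> ideal_gen n (mon_ideal ?U \<union> insert (var n) A)"
    using ideal_gen_superset by (rule subset_trans)
qed

lemma WLE_wmons_lim_add_last_var:
  assumes A: "A \<subseteq> (polyring n' :: 'k::field mpoly set)"
    and L: "WLE n' (ideal_gen n' (mon_ideal V \<union> A)) L"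
  shows "WLE n (ideal_gen n (mon_ideal (wmons_lim n h (multiples n V)) \<union> insert (var n) A)) L"
proof -
  have "mon_ideal V \<union> A \<subseteq> (polyring n' :: 'k mpoly set)"
    using A mon_ideal_polyring[OF upclosed_Mons[OF V]] by blast
  from this L have "WLE n (ideal_gen n ((mon_ideal V \<union> A) \<union> {var n})) L"
    unfolding n_Suc by (rule WLE_add_last_var)
  then show ?thesis using ideal_gen_wmons_lim_last_var[OF A] by simp
qed

end

lemma Mon_zero_vars: "0 < d \<Longrightarrow> Mon 0 d = {}"
  by (auto simp: Mon_def)

lemma mWLP_no_vars: "mWLP 0 (I :: 'k::field mpoly set) m"
  unfolding mWLP_def
proof (intro exI[of _ "replicate m 0"] conjI allI impI)
  show "length (replicate m (0 :: 'k mpoly)) = m" by simp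
  fix i assume "i < m"
  have "maxrank 0 J 0 d" if "1 \<le> d" for J :: "'k mpoly set" and d
    using that Mon_zero_vars[of d] by (simp add: maxrank_def hom_def)
  then have "WLE 0 J 0" for J :: "'k mpoly set" by (simp add: WLE_def hom_def)
  then show "WLE 0 (ideal_gen 0 (I \<union> set (take i (replicate m 0)))) (replicate m 0 ! i)"
    using \<open>i < m\<close> by simp
qed

lemma WLseq_SucE:
  assumes "WLseq TYPE('k::field) (Suc m) h"
  obtains k where "unimodal_at h k" "h ! 0 = 1" "WLseq TYPE('k) m (Delta h)"
  using assms by (auto simp: unimodal_def Oseq_def)

lemma W_Suc_eq_mon_ideal:
  assumes "n' \<le> hv h 1" "upclosed n' V" "(W m (Delta h) :: 'k::field mpoly set) = mon_ideal V"
  shows "(W (Suc m) h :: 'k mpoly set) = mon_ideal (wmons_lim (hv h 1) h (multiples (hv h 1) V))"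
proof -
  let ?n = "hv h 1"
  have VM: "V \<subseteq> Mons ?n" using upclosed_Mons[OF assms(2)] Mons_mono[OF assms(1)] by blast
  have g: "ideal_gen ?n (mon_ideal V :: 'k mpoly set) = mon_ideal (multiples ?n V)"
  proof (rule ideal_gen_eq_mon_ideal[OF VM])
    show "monom ` V \<subseteq> (mon_ideal V :: 'k mpoly set)" by (auto simp: mon_ideal_def)
    show "(mon_ideal V :: 'k mpoly set) \<subseteq> mon_ideal (multiples ?n V)"
      using subset_multiples[OF VM] by (auto simp: mon_ideal_def)
  qed
  have "(W (Suc m) h :: 'k mpoly set) = (\<Union>d. wstage ?n h (ideal_gen ?n (W m (Delta h))) d)"
    by (simp add: Let_def)
  also have "\<dots> = (\<Union>d. wstage ?n h (mon_ideal (multiples ?n V)) d)" using assms(3) g by simp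
  also have "\<dots> = mon_ideal (wmons_lim ?n h (multiples ?n V))"
    by (rule UN_wstage_eq_mon_ideal[OF upclosed_multiples])
  finally show ?thesis .
qed

lemma W_eq_mon_ideal:
  "WLseq TYPE('k::field) m h \<Longrightarrow> \<exists>U. upclosed (hv h 1) U \<and> (W m h :: 'k mpoly set) = mon_ideal U
     \<and> (\<forall>j. card (Mon (hv h 1) j - U) \<le> hv h j)"
proof (induction m arbitrary: h)
  case 0
  let ?N = "hv h 1"
  let ?S = "\<Union>d. top lex_gt (card (Mon ?N d) - hv h d) (Mon ?N d)"
  show ?case
  proof (intro exI conjI allI)
    show "upclosed ?N (multiples ?N ?S)" by (rule upclosed_multiples)
    show "(W 0 h :: 'k mpoly set) = mon_ideal (multiples ?N ?S)" using Lex_eq_mon_ideal[of h] by simp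
    fix j show "card (Mon ?N j - multiples ?N ?S) \<le> hv h j" by (rule card_standard_Lex)
  qed
next
  case (Suc m)
  obtain k where k: "unimodal_at h k" "h ! 0 = 1" and wl: "WLseq TYPE('k) m (Delta h)"
    using Suc.prems by (rule WLseq_SucE)
  from Suc.IH[OF wl] obtain V where
    V: "upclosed (hv (Delta h) 1) V" "(W m (Delta h) :: 'k mpoly set) = mon_ideal V" by blast
  have "(W (Suc m) h :: 'k mpoly set) = mon_ideal (wmons_lim (hv h 1) h (multiples (hv h 1) V))"
    using hv_Delta_1[OF k] by (intro W_Suc_eq_mon_ideal[OF _ V]) simp
  then show ?case
    using upclosed_wmons_lim[OF upclosed_multiples] card_standard_wmons_lim by blast
qed

lemma mWLP_W_Suc:
  assumes wl: "WLseq TYPE('k::field) (Suc m) h"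
    and IH: "mWLP (hv (Delta h) 1) (W m (Delta h) :: 'k mpoly set) m"
  shows "mWLP (hv h 1) (W (Suc m) h :: 'k mpoly set) (Suc m)"
proof (cases "hv h 1")
  case 0
  then show ?thesis using mWLP_no_vars by simp
next
  case (Suc n')
  define n where "n = hv h 1"
  have n_Suc: "n = Suc n'" using Suc by (simp add: n_def)
  obtain k where k: "unimodal_at h k" "h ! 0 = 1" and wl': "WLseq TYPE('k) m (Delta h)"
    using wl by (rule WLseq_SucE)
  have Delta_1: "hv (Delta h) 1 = n'" using hv_Delta_1[OF k] n_Suc by (simp add: n_def)
  obtain V where V: "upclosed n' V" "(W m (Delta h) :: 'k mpoly set) = mon_ideal V"
    and card_V: "\<And>j. card (Mon n' j - V) \<le> hv (Delta h) j"
    using W_eq_mon_ideal[OF wl'] Delta_1 by auto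
  note lim = n_Suc V(1) card_V sum_Delta_le_or_zero[OF k]
  let ?U = "wmons_lim n h (multiples n V)"
  have W_Suc: "(W (Suc m) h :: 'k mpoly set) = mon_ideal ?U"
    unfolding n_def by (rule W_Suc_eq_mon_ideal[OF _ V]) (use Suc in auto)
  from IH obtain Ls where len: "length Ls = m"
    and Ls: "\<forall>i<m. WLE n' (ideal_gen n' ((mon_ideal V :: 'k mpoly set) \<union> set (take i Ls))) (Ls ! i)"
    using V(2) Delta_1 by (auto simp: mWLP_def)
  have Ls_poly: "set Ls \<subseteq> polyring n'"
  proof
    fix L assume "L \<in> set Ls"
    then obtain i where "i < m" "L = Ls ! i" using len by (auto simp: in_set_conv_nth)
    then have "L \<in> hom n' 1" using Ls by (simp add: WLE_def)
    then show "L \<in> polyring n'" using hom_polyring by blast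
  qed
  show ?thesis
    unfolding mWLP_def W_Suc n_def[symmetric]
  proof (intro exI[of _ "var n # Ls"] conjI allI impI)
    show "length (var n # Ls) = Suc m" using len by simp
    fix i assume i: "i < Suc m"
    show "WLE n (ideal_gen n (mon_ideal ?U \<union> set (take i (var n # Ls)))) ((var n # Ls) ! i)"
    proof (cases i)
      case 0
      have "ideal_gen n (mon_ideal ?U) = (mon_ideal ?U :: 'k mpoly set)"
        by (rule ideal_gen_mon_ideal[OF upclosed_wmons_lim[OF upclosed_multiples]])
      then show ?thesis using WLE_last_var[OF lim] 0 by simp
    next
      case (Suc j)
      have "set (take j Ls) \<subseteq> polyring n'"
        using set_take_subset[of j Ls] Ls_poly by (rule subset_trans)
      moreover have "j < m" using i Suc by simp
      ultimately have "WLE n (ideal_gen n (mon_ideal ?U \<union> insert (var n) (set (take j Ls)))) (Ls ! j)"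
        using Ls by (intro WLE_wmons_lim_add_last_var[OF lim]) auto
      then show ?thesis using Suc by simp
    qed
  qed
qed

lemma mWLP_W: "WLseq TYPE('k::field) m h \<Longrightarrow> mWLP (hv h 1) (W m h :: 'k mpoly set) m"
proof (induction m arbitrary: h)
  case 0
  show ?case by (simp add: mWLP_def)
next
  case (Suc m)
  have "WLseq TYPE('k) m (Delta h)" using Suc.prems by simp
  then show ?case by (rule mWLP_W_Suc[OF Suc.prems Suc.IH])
qed

theorem proposition3p2:
  fixes h :: "nat list" and m :: nat
  assumes "1 \<le> m"
    and "WLseq TYPE('k::field_char_0) m h"
  shows "mWLP (hv h 1) (W m h :: 'k mpoly set) m"
  using mWLP_W assms(2) .

end
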